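(* For every odd integer $k\geq 5$ and every integer $n\geq 2$, $$Q(n,k)\geq 2^{\left(\frac{k-3}{2}\right)^{\lfloor\frac{n-1}{2}\rfloor}\left(\frac{k-1}{2}\right)^{\lceil\frac{n+1}{2}\rceil}}>2^{\left(\frac{k-3}{2}\right)^{n/2}\left(\frac{k-1}{2}\right)^{n/2}}.$$
   Context: An $n$-ary quasigroup of order $k$ is a function $f:\Sigma^n\to\Sigma$, where $\Sigma=\{0,1,\dots,k-1\}$, such that fixing any $n-1$ of its arguments to arbitrary values of $\Sigma$ yields a bijection $\Sigma\to\Sigma$ in the remaining argument. $Q(n,k)$ denotes the number of distinct $n$-ary quasigroups of order $k$ on the fixed set $\Sigma=\{0,1,\dots,k-1\}$. *)

theory Defs
  imports "HOL-Library.FuncSet" Complex_Main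
begin

text \<open>Sigma = {0..<k}. An n-ary operation is a function from length-n lists over Sigma
  to Sigma, taken extensionally (value undefined outside the domain), so that distinct
  functions correspond to distinct operations.\<close>

definition arg_tuples :: "nat \<Rightarrow> nat \<Rightarrow> nat list set" where
  "arg_tuples n k = {xs. length xs = n \<and> set xs \<subseteq> {0..<k}}"

definition is_quasigroup :: "nat \<Rightarrow> nat \<Rightarrow> (nat list \<Rightarrow> nat) \<Rightarrow> bool" where
  "is_quasigroup n k f \<longleftrightarrow>
     f \<in> arg_tuples n k \<rightarrow>\<^sub>E {0..<k} \<and>
     (\<forall>i<n. \<forall>xs \<in> arg_tuples n k.
        bij_betw (\<lambda>a. f (xs[i := a])) {0..<k} {0..<k})"

definition Q :: "nat \<Rightarrow> nat \<Rightarrow> nat" where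
  "Q n k = card {f. is_quasigroup n k f}"

end

theory Submission
  imports Defs "HOL-Number_Theory.Cong"
begin

text \<open>Write \<open>k = 2 * m + 1\<close> and group the symbols below \<open>2 * m\<close> into the \<open>m\<close> pairs
  \<open>{2 * j, 2 * j + 1}\<close>. A switching component of an \<open>n\<close>-ary quasigroup \<open>f\<close> is a set of tuples
  on which \<open>f\<close> takes values in one pair and which contains, on every line through each of its
  points, the point carrying the partner value. Exchanging the two symbols of the pair on a
  component gives another quasigroup, and disjoint components can be switched independently,
  so \<open>N\<close> disjoint components give \<open>2 ^ N\<close> quasigroups.

  In a composition \<open>f (x @ y) = q (G x) (H y)\<close> with a Latin square \<open>q\<close>, the products of
  components of \<open>G\<close> and \<open>H\<close> on whose pairs \<open>q\<close> acts like the addition of \<open>\<int>/2\<close>, and the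
  preimages of the components of \<open>q\<close> itself, are components of \<open>f\<close>. Taking for \<open>q\<close> a
  prolongation of a Latin square of order \<open>m\<close> along a transversal and counting the components
  in each pair class by induction on \<open>n\<close> gives \<open>(m - 1) ^ ((n - 1) div 2) * m ^ ((n + 2) div 2)\<close>
  disjoint components. For \<open>m = 2\<close>, where no transversal exists, a fixed square of order 5 is
  used instead and the switchings of the two factors are counted as well. The strict inequality holds because \<open>a ^ p * b ^ q > (a * b) powr (n / 2)\<close>
  for \<open>0 < a < b\<close> and \<open>p < n / 2 < q = n - p\<close>.\<close>

section \<open>Quasigroups on tuples\<close>

text \<open>The quasigroup property without the extensionality requirement of \<open>is_quasigroup\<close>;
  restricting to \<open>arg_tuples n k\<close> turns one into the other.\<close>

definition quasigroup_on :: "nat \<Rightarrow> nat \<Rightarrow> (nat list \<Rightarrow> nat) \<Rightarrow> bool" where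
  "quasigroup_on n k f \<longleftrightarrow> (\<forall>xs\<in>arg_tuples n k. f xs < k) \<and>
     (\<forall>i<n. \<forall>xs\<in>arg_tuples n k. bij_betw (\<lambda>a. f (xs[i:=a])) {0..<k} {0..<k})"

lemma finite_arg_tuples: "finite (arg_tuples n k)"
  unfolding arg_tuples_def using finite_lists_length_eq[of "{0..<k}" n] by (simp add: conj_commute)

lemma length_arg_tuples: "xs \<in> arg_tuples n k \<Longrightarrow> length xs = n"
  unfolding arg_tuples_def by simp

lemma arg_tuples_update: "xs \<in> arg_tuples n k \<Longrightarrow> a < k \<Longrightarrow> xs[i:=a] \<in> arg_tuples n k"
  unfolding arg_tuples_def using set_update_subset_insert[of xs i a] by auto

lemma append_in_arg_tuples:
  "x \<in> arg_tuples a k \<Longrightarrow> y \<in> arg_tuples b k \<Longrightarrow> x @ y \<in> arg_tuples (a + b) k"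
  unfolding arg_tuples_def by auto

lemma take_in_arg_tuples: "xs \<in> arg_tuples (a + b) k \<Longrightarrow> take a xs \<in> arg_tuples a k"
  unfolding arg_tuples_def by (auto dest: in_set_takeD)

lemma drop_in_arg_tuples: "xs \<in> arg_tuples (a + b) k \<Longrightarrow> drop a xs \<in> arg_tuples b k"
  unfolding arg_tuples_def by (auto dest: in_set_dropD)

lemma quasigroup_on_range: "quasigroup_on n k f \<Longrightarrow> xs \<in> arg_tuples n k \<Longrightarrow> f xs < k"
  by (simp add: quasigroup_on_def)

lemma quasigroup_on_line_bij:
  "quasigroup_on n k f \<Longrightarrow> i < n \<Longrightarrow> xs \<in> arg_tuples n k
   \<Longrightarrow> bij_betw (\<lambda>a. f (xs[i:=a])) {0..<k} {0..<k}"
  by (simp add: quasigroup_on_def)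

lemma quasigroup_on_line_inj:
  "quasigroup_on n k f \<Longrightarrow> i < n \<Longrightarrow> xs \<in> arg_tuples n k \<Longrightarrow> a < k \<Longrightarrow> b < k
   \<Longrightarrow> f (xs[i:=a]) = f (xs[i:=b]) \<Longrightarrow> a = b"
  using inj_onD[OF bij_betw_imp_inj_on[OF quasigroup_on_line_bij]] by force

lemma quasigroup_on_line_surj:
  assumes "quasigroup_on n k f" "i < n" "xs \<in> arg_tuples n k" "u < k"
  shows "\<exists>a<k. f (xs[i:=a]) = u"
proof -
  have "u \<in> (\<lambda>a. f (xs[i:=a])) ` {0..<k}"
    using bij_betw_imp_surj_on[OF quasigroup_on_line_bij[OF assms(1-3)]] assms(4) by simp
  then show ?thesis by auto
qed

lemma quasigroup_on_surj:
  assumes "quasigroup_on n k f" "0 < n" "u < k"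
  shows "\<exists>xs\<in>arg_tuples n k. f xs = u"
proof -
  have zeros: "replicate n 0 \<in> arg_tuples n k"
    using assms(3) unfolding arg_tuples_def by auto
  then obtain a where "a < k" "f ((replicate n 0)[0:=a]) = u"
    using quasigroup_on_line_surj[OF assms(1,2) _ assms(3)] by blast
  then show ?thesis using arg_tuples_update[OF zeros] by blast
qed

lemma is_quasigroup_restrict:
  assumes "quasigroup_on n k f"
  shows "is_quasigroup n k (restrict f (arg_tuples n k))"
proof -
  have "bij_betw (\<lambda>a. restrict f (arg_tuples n k) (xs[i := a])) {0..<k} {0..<k}"
    if "i < n" "xs \<in> arg_tuples n k" for i xs
    using quasigroup_on_line_bij[OF assms that]
    by (rule bij_betw_cong[THEN iffD1, rotated]) (simp add: arg_tuples_update[OF that(2)])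
  with assms show ?thesis
    unfolding is_quasigroup_def quasigroup_on_def by auto
qed

lemma card_le_Q:
  assumes "finite A" and "\<And>x. x \<in> A \<Longrightarrow> quasigroup_on n k (F x)"
    and "\<And>x y. x \<in> A \<Longrightarrow> y \<in> A \<Longrightarrow> (\<And>z. z \<in> arg_tuples n k \<Longrightarrow> F x z = F y z) \<Longrightarrow> x = y"
  shows "card A \<le> Q n k"
proof -
  let ?G = "\<lambda>x. restrict (F x) (arg_tuples n k)"
  have "finite {f. is_quasigroup n k f}"
    by (rule finite_subset[of _ "arg_tuples n k \<rightarrow>\<^sub>E {0..<k}"])
       (auto simp: is_quasigroup_def finite_arg_tuples intro: finite_PiE)
  moreover have "?G ` A \<subseteq> {f. is_quasigroup n k f}"
    using assms(2) is_quasigroup_restrict by auto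
  ultimately have "card (?G ` A) \<le> Q n k"
    unfolding Q_def by (rule card_mono)
  moreover have "inj_on ?G A"
    using assms(3) by (intro inj_onI) (metis restrict_apply')
  ultimately show ?thesis
    by (simp add: card_image)
qed

lemma arg_tuples_Suc_0: "xs \<in> arg_tuples (Suc 0) k \<longleftrightarrow> (\<exists>x<k. xs = [x])"
  unfolding arg_tuples_def by (auto simp: length_Suc_conv)

lemma quasigroup_on_hd: "quasigroup_on (Suc 0) k hd"
proof -
  have "(\<lambda>a. hd (xs[0:=a])) = id" if "xs \<in> arg_tuples (Suc 0) k" for xs
    using that by (auto simp: arg_tuples_Suc_0)
  then show ?thesis
    unfolding quasigroup_on_def by (auto simp: arg_tuples_Suc_0)
qed

definition latin_square :: "nat \<Rightarrow> (nat \<Rightarrow> nat \<Rightarrow> nat) \<Rightarrow> bool" where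
  "latin_square k q \<longleftrightarrow> (\<forall>u<k. bij_betw (q u) {0..<k} {0..<k}) \<and>
     (\<forall>v<k. bij_betw (\<lambda>u. q u v) {0..<k} {0..<k})"

lemma latin_square_row: "latin_square k q \<Longrightarrow> u < k \<Longrightarrow> bij_betw (q u) {0..<k} {0..<k}"
  by (simp add: latin_square_def)

lemma latin_square_col: "latin_square k q \<Longrightarrow> v < k \<Longrightarrow> bij_betw (\<lambda>u. q u v) {0..<k} {0..<k}"
  by (simp add: latin_square_def)

lemma latin_square_range: "latin_square k q \<Longrightarrow> u < k \<Longrightarrow> v < k \<Longrightarrow> q u v < k"
  using bij_betwE[OF latin_square_row] by fastforce

lemma latin_square_row_inj:
  "latin_square k q \<Longrightarrow> u < k \<Longrightarrow> v < k \<Longrightarrow> v' < k \<Longrightarrow> q u v = q u v' \<Longrightarrow> v = v'"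
  using bij_betw_imp_inj_on[OF latin_square_row] by (fastforce dest: inj_onD)

lemma latin_square_col_inj:
  "latin_square k q \<Longrightarrow> v < k \<Longrightarrow> u < k \<Longrightarrow> u' < k \<Longrightarrow> q u v = q u' v \<Longrightarrow> u = u'"
  using bij_betw_imp_inj_on[OF latin_square_col] by (fastforce dest: inj_onD)

lemma latin_square_row_surj:
  assumes "latin_square k q" "u < k" "w < k"
  shows "\<exists>v<k. q u v = w"
proof -
  have "w \<in> q u ` {0..<k}"
    using bij_betw_imp_surj_on[OF latin_square_row[OF assms(1,2)]] assms(3) by simp
  then show ?thesis by auto
qed

lemma latin_square_transpose: "latin_square k q \<Longrightarrow> latin_square k (\<lambda>v u. q u v)"
  by (simp add: latin_square_def)

lemma bij_betw_atLeast0LessThan_if_surj: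
  fixes f :: "nat \<Rightarrow> nat"
  assumes "\<And>u. u < k \<Longrightarrow> f u < k" and "\<And>w. w < k \<Longrightarrow> \<exists>u<k. f u = w"
  shows "bij_betw f {0..<k} {0..<k}"
proof -
  have "f ` {0..<k} = {0..<k}"
  proof
    show "{0..<k} \<subseteq> f ` {0..<k}"
      using assms(2) by (fastforce simp: image_iff)
  qed (use assms(1) in auto)
  then show ?thesis
    by (simp add: bij_betw_def eq_card_imp_inj_on)
qed

lemma bij_betw_atLeast0LessThan_if_inj:
  fixes f :: "nat \<Rightarrow> nat"
  assumes "\<And>u. u < k \<Longrightarrow> f u < k" and "\<And>u v. u < k \<Longrightarrow> v < k \<Longrightarrow> f u = f v \<Longrightarrow> u = v"
  shows "bij_betw f {0..<k} {0..<k}"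
proof -
  have "inj_on f {0..<k}"
    using assms(2) by (auto intro: inj_onI)
  moreover from this have "f ` {0..<k} = {0..<k}"
    using assms(1) by (intro endo_inj_surj) auto
  ultimately show ?thesis
    by (simp add: bij_betw_def)
qed

definition compose ::
  "nat \<Rightarrow> (nat \<Rightarrow> nat \<Rightarrow> nat) \<Rightarrow> (nat list \<Rightarrow> nat) \<Rightarrow> (nat list \<Rightarrow> nat) \<Rightarrow> nat list \<Rightarrow> nat" where
  "compose a q G H xs = q (G (take a xs)) (H (drop a xs))"

lemma compose_append: "length x = a \<Longrightarrow> compose a q G H (x @ y) = q (G x) (H y)"
  by (simp add: compose_def)

lemma quasigroup_on_compose:
  assumes G: "quasigroup_on a k G" and H: "quasigroup_on b k H" and q: "latin_square k q"
  shows "quasigroup_on (a + b) k (compose a q G H)"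
  unfolding quasigroup_on_def
proof (intro conjI ballI allI impI)
  fix xs assume xs: "xs \<in> arg_tuples (a + b) k"
  note x = take_in_arg_tuples[OF xs] and y = drop_in_arg_tuples[OF xs]
  show "compose a q G H xs < k"
    unfolding compose_def
    by (rule latin_square_range[OF q quasigroup_on_range[OF G x] quasigroup_on_range[OF H y]])
  fix i assume i: "i < a + b"
  show "bij_betw (\<lambda>c. compose a q G H (xs[i:=c])) {0..<k} {0..<k}"
  proof (cases "i < a")
    case True
    have "bij_betw ((\<lambda>u. q u (H (drop a xs))) \<circ> (\<lambda>c. G ((take a xs)[i:=c]))) {0..<k} {0..<k}"
      using quasigroup_on_line_bij[OF G True x] latin_square_col[OF q quasigroup_on_range[OF H y]]
      by (rule bij_betw_trans)
    then show ?thesis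
      using True by (simp add: compose_def take_update_swap o_def)
  next
    case False
    then have "i - a < b" using i by simp
    have "bij_betw (q (G (take a xs)) \<circ> (\<lambda>c. H ((drop a xs)[i-a:=c]))) {0..<k} {0..<k}"
      using quasigroup_on_line_bij[OF H \<open>i - a < b\<close> y] latin_square_row[OF q quasigroup_on_range[OF G x]]
      by (rule bij_betw_trans)
    then show ?thesis
      using False by (simp add: compose_def drop_update_swap o_def)
  qed
qed

section \<open>Switching components\<close>

locale paired_symbols =
  fixes m k :: nat
  assumes pairs_below: "2 * m < k"
begin

definition partner :: "nat \<Rightarrow> nat" where
  "partner v = (if v < 2 * m then if even v then v + 1 else v - 1 else v)"

lemma partner_less: "v < 2 * m \<Longrightarrow> partner v < 2 * m"
  unfolding partner_def by (auto elim: evenE)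

lemma partner_less_k: "v < k \<Longrightarrow> partner v < k"
proof (cases "v < 2 * m")
  case True
  then show ?thesis using partner_less[OF True] pairs_below by simp
qed (simp add: partner_def)

lemma partner_partner [simp]: "partner (partner v) = v"
  unfolding partner_def by (auto elim!: evenE oddE)

lemma partner_div [simp]: "partner v div 2 = v div 2"
  unfolding partner_def by (auto elim!: evenE oddE)

lemma partner_neq: "v < 2 * m \<Longrightarrow> partner v \<noteq> v"
  unfolding partner_def by (auto elim!: oddE)

lemma partner_inj: "partner u = partner v \<Longrightarrow> u = v"
  by (metis partner_partner)

lemma partner_double:
  "x < m \<Longrightarrow> partner (2 * x) = 2 * x + 1" "x < m \<Longrightarrow> partner (2 * x + 1) = 2 * x"
  unfolding partner_def by auto

text \<open>Replacing \<open>f\<close> by \<open>partner \<circ> f\<close> on a component keeps every line a bijection,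
  because along each line the points of the component come in pairs carrying partner values.\<close>

definition component :: "nat \<Rightarrow> (nat list \<Rightarrow> nat) \<Rightarrow> nat list set \<Rightarrow> bool" where
  "component n f K \<longleftrightarrow> K \<subseteq> arg_tuples n k \<and> (\<forall>z\<in>K. f z < 2 * m) \<and>
     (\<forall>z\<in>K. \<forall>i<n. \<exists>a<k. z[i:=a] \<in> K \<and> f (z[i:=a]) = partner (f z))"

lemma component_subset: "component n f K \<Longrightarrow> K \<subseteq> arg_tuples n k"
  by (simp add: component_def)

lemma component_range: "component n f K \<Longrightarrow> z \<in> K \<Longrightarrow> f z < 2 * m"
  by (simp add: component_def)

lemma component_neighbour:
  "component n f K \<Longrightarrow> z \<in> K \<Longrightarrow> i < n \<Longrightarrow> \<exists>a<k. z[i:=a] \<in> K \<and> f (z[i:=a]) = partner (f z)"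
  by (simp add: component_def)

lemma componentI:
  "K \<subseteq> arg_tuples n k \<Longrightarrow> (\<And>z. z \<in> K \<Longrightarrow> f z < 2 * m) \<Longrightarrow>
   (\<And>z i. z \<in> K \<Longrightarrow> i < n \<Longrightarrow> \<exists>a<k. z[i:=a] \<in> K \<and> f (z[i:=a]) = partner (f z)) \<Longrightarrow>
   component n f K"
  by (simp add: component_def)

definition pair_class :: "(nat list \<Rightarrow> nat) \<Rightarrow> nat list set \<Rightarrow> nat" where
  "pair_class f K = f (SOME z. z \<in> K) div 2"

lemma pair_class_eqI: "X \<noteq> {} \<Longrightarrow> (\<And>z. z \<in> X \<Longrightarrow> f z div 2 = r) \<Longrightarrow> pair_class f X = r"
  unfolding pair_class_def by (simp add: some_in_eq)

definition component_family :: "nat \<Rightarrow> (nat list \<Rightarrow> nat) \<Rightarrow> nat list set set \<Rightarrow> bool" where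
  "component_family n f Ks \<longleftrightarrow> quasigroup_on n k f \<and>
     (\<forall>K\<in>Ks. K \<noteq> {} \<and> component n f K \<and> (\<forall>z\<in>K. f z div 2 = pair_class f K)) \<and>
     pairwise disjnt Ks"

lemma component_familyI:
  assumes "quasigroup_on n k f"
    and "\<And>K. K \<in> Ks \<Longrightarrow> K \<noteq> {} \<and> component n f K \<and> (\<forall>z\<in>K. f z div 2 = pair_class f K)"
    and "\<And>K K' z. K \<in> Ks \<Longrightarrow> K' \<in> Ks \<Longrightarrow> z \<in> K \<Longrightarrow> z \<in> K' \<Longrightarrow> K = K'"
  shows "component_family n f Ks"
  using assms unfolding component_family_def pairwise_def disjnt_def by blast

context
  fixes n f Ks
  assumes family: "component_family n f Ks"
begin

lemma family_quasigroup: "quasigroup_on n k f"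
  using family by (simp add: component_family_def)

lemma family_nonempty: "K \<in> Ks \<Longrightarrow> K \<noteq> {}"
  using family by (simp add: component_family_def)

lemma family_component: "K \<in> Ks \<Longrightarrow> component n f K"
  using family by (simp add: component_family_def)

lemma family_class: "K \<in> Ks \<Longrightarrow> z \<in> K \<Longrightarrow> f z div 2 = pair_class f K"
  using family by (simp add: component_family_def)

lemma family_disjoint: "K \<in> Ks \<Longrightarrow> K' \<in> Ks \<Longrightarrow> z \<in> K \<Longrightarrow> z \<in> K' \<Longrightarrow> K = K'"
  using family unfolding component_family_def pairwise_def disjnt_def by blast

lemma family_length: "K \<in> Ks \<Longrightarrow> z \<in> K \<Longrightarrow> length z = n"
  using component_subset[OF family_component] length_arg_tuples by blast

lemma family_range: "K \<in> Ks \<Longrightarrow> z \<in> K \<Longrightarrow> f z < 2 * m"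
  using component_range[OF family_component] by blast

lemma finite_family: "finite Ks"
proof (rule finite_subset)
  show "Ks \<subseteq> Pow (arg_tuples n k)"
    using component_subset[OF family_component] by blast
qed (simp add: finite_arg_tuples)

end

definition switch :: "(nat list \<Rightarrow> nat) \<Rightarrow> nat list set set \<Rightarrow> nat list \<Rightarrow> nat" where
  "switch f S z = (if z \<in> \<Union>S then partner (f z) else f z)"

context
  fixes n f Ks S
  assumes family: "component_family n f Ks" and switched: "S \<subseteq> Ks"
begin

lemma switch_on_component:
  assumes "K \<in> Ks" "z \<in> K"
  shows "switch f S z = (if K \<in> S then partner (f z) else f z)"
proof -
  have "z \<in> \<Union>S \<longleftrightarrow> K \<in> S"
    using assms family_disjoint[OF family _ assms(1) _ assms(2)] switched by blast
  then show ?thesis unfolding switch_def by simp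
qed

lemma switched_line_partner:
  assumes i: "i < n" and xs: "xs \<in> arg_tuples n k" and "b < k" and a: "xs[i:=a] \<in> \<Union>S"
    and partner_b: "partner (f (xs[i:=a])) = f (xs[i:=b])"
  shows "xs[i:=b] \<in> \<Union>S"
proof -
  obtain K where K: "K \<in> S" "xs[i:=a] \<in> K" using a by blast
  then have "component n f K" using family_component[OF family] switched by blast
  then obtain c where c: "c < k" "xs[i:=c] \<in> K" "f (xs[i:=c]) = partner (f (xs[i:=a]))"
    using component_neighbour[OF _ K(2) i] by auto
  then have "c = b"
    using quasigroup_on_line_inj[OF family_quasigroup[OF family] i xs c(1) \<open>b < k\<close>] partner_b by simp
  then show ?thesis using c K(1) by blast
qed

lemma quasigroup_on_switch: "quasigroup_on n k (switch f S)"
proof -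
  note qf = family_quasigroup[OF family]
  have line_bij: "bij_betw (\<lambda>a. switch f S (xs[i:=a])) {0..<k} {0..<k}"
    if i: "i < n" and xs: "xs \<in> arg_tuples n k" for i xs
  proof (rule bij_betw_atLeast0LessThan_if_inj)
    fix a assume "a < k"
    then show "switch f S (xs[i:=a]) < k"
      using quasigroup_on_range[OF qf arg_tuples_update[OF xs]] partner_less_k
      unfolding switch_def by auto
  next
    fix a b assume ab: "a < k" "b < k" and eq: "switch f S (xs[i:=a]) = switch f S (xs[i:=b])"
    note stays = switched_line_partner[OF i xs]
    have "f (xs[i:=a]) = f (xs[i:=b])"
    proof (cases "xs[i:=a] \<in> \<Union>S"; cases "xs[i:=b] \<in> \<Union>S")
      assume "xs[i:=a] \<in> \<Union>S" "xs[i:=b] \<in> \<Union>S"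
      then show ?thesis using eq partner_inj unfolding switch_def by simp
    next
      assume a: "xs[i:=a] \<in> \<Union>S" and "xs[i:=b] \<notin> \<Union>S"
      then show ?thesis using eq stays[OF ab(2) a] unfolding switch_def by simp
    next
      assume "xs[i:=a] \<notin> \<Union>S" and b: "xs[i:=b] \<in> \<Union>S"
      then show ?thesis using eq stays[OF ab(1) b] unfolding switch_def by simp
    next
      assume "xs[i:=a] \<notin> \<Union>S" "xs[i:=b] \<notin> \<Union>S"
      then show ?thesis using eq unfolding switch_def by simp
    qed
    then show "a = b"
      using quasigroup_on_line_inj[OF qf i xs ab] by simp
  qed
  show ?thesis
    using quasigroup_on_range[OF qf] partner_less_k line_bij
    unfolding quasigroup_on_def switch_def by auto
qed

lemma pair_class_switch: "K \<in> Ks \<Longrightarrow> pair_class (switch f S) K = pair_class f K"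
  unfolding pair_class_def
  using switch_on_component[OF _ some_in_eq[THEN iffD2, OF family_nonempty[OF family]]] by simp

lemma component_family_switch: "component_family n (switch f S) Ks"
proof (rule component_familyI)
  show "quasigroup_on n k (switch f S)" by (rule quasigroup_on_switch)
next
  fix K assume K: "K \<in> Ks"
  note on_K = switch_on_component[OF K]
  have "component n (switch f S) K"
  proof (rule componentI)
    show "K \<subseteq> arg_tuples n k"
      using component_subset[OF family_component[OF family K]] .
    fix z assume z: "z \<in> K"
    show "switch f S z < 2 * m"
      using on_K[OF z] family_range[OF family K z] partner_less by simp
    fix i assume "i < n"
    then obtain a where a: "a < k" "z[i:=a] \<in> K" "f (z[i:=a]) = partner (f z)"
      using component_neighbour[OF family_component[OF family K] z] by blast
    then have "switch f S (z[i:=a]) = partner (switch f S z)"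
      using on_K[OF z] on_K[OF a(2)] by simp
    then show "\<exists>a<k. z[i:=a] \<in> K \<and> switch f S (z[i:=a]) = partner (switch f S z)"
      using a by blast
  qed
  then show "K \<noteq> {} \<and> component n (switch f S) K \<and>
      (\<forall>z\<in>K. switch f S z div 2 = pair_class (switch f S) K)"
    using family_nonempty[OF family K] family_class[OF family K] on_K pair_class_switch[OF K]
    by simp
qed (use family_disjoint[OF family] in blast)

end

lemma switch_inj:
  assumes family: "component_family n f Ks" and "S \<subseteq> Ks" "S' \<subseteq> Ks"
    and eq: "\<And>z. z \<in> arg_tuples n k \<Longrightarrow> switch f S z = switch f S' z"
  shows "S = S'"
proof -
  have "K \<in> S'" if S: "S \<subseteq> Ks" "S' \<subseteq> Ks" and K: "K \<in> S"
    and eq: "\<And>z. z \<in> arg_tuples n k \<Longrightarrow> switch f S z = switch f S' z" for S S' K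
  proof (rule ccontr)
    assume "K \<notin> S'"
    have "K \<in> Ks" using S K by blast
    then obtain z where z: "z \<in> K" using family_nonempty[OF family] by blast
    have "z \<in> arg_tuples n k"
      using component_subset[OF family_component[OF family \<open>K \<in> Ks\<close>]] z by blast
    then have "partner (f z) = f z"
      using eq switch_on_component[OF family S(1) \<open>K \<in> Ks\<close> z]
        switch_on_component[OF family S(2) \<open>K \<in> Ks\<close> z] K \<open>K \<notin> S'\<close> by simp
    then show False
      using partner_neq[OF family_range[OF family \<open>K \<in> Ks\<close> z]] by simp
  qed
  then show ?thesis
    using assms by (metis subsetI subset_antisym)
qed

theorem two_pow_card_le_Q:
  assumes "component_family n f Ks"
  shows "2 ^ card Ks \<le> Q n k"
proof -
  have "card (Pow Ks) \<le> Q n k"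
    using finite_family[OF assms] quasigroup_on_switch[OF assms] switch_inj[OF assms]
    by (intro card_le_Q[where F = "switch f"]) auto
  then show ?thesis
    using card_Pow finite_family[OF assms] by metis
qed

lemma card_family_ge:
  assumes "component_family n f Ks" and "\<And>r. r < m \<Longrightarrow> e \<le> card {K \<in> Ks. pair_class f K = r}"
  shows "m * e \<le> card Ks"
proof -
  have "m * e \<le> (\<Sum>r<m. card {K \<in> Ks. pair_class f K = r})"
    using sum_mono[of "{..<m}" "\<lambda>_. e"] assms(2) by simp
  also have "\<dots> = card (\<Union>r<m. {K \<in> Ks. pair_class f K = r})"
    using finite_family[OF assms(1)] by (intro card_UN_disjoint[symmetric]) auto
  also have "\<dots> \<le> card Ks"
    using finite_family[OF assms(1)] by (intro card_mono) auto
  finally show ?thesis .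
qed

definition unary_components :: "nat list set set" where
  "unary_components = (\<lambda>p. {[2 * p], [2 * p + 1]}) ` {..<m}"

lemma pair_class_unary: "pair_class hd {[2 * p], [2 * p + 1]} = p"
  by (rule pair_class_eqI) auto

lemma component_unary:
  assumes "p < m"
  shows "component (Suc 0) hd {[2 * p], [2 * p + 1]}"
proof (rule componentI)
  show "{[2 * p], [2 * p + 1]} \<subseteq> arg_tuples (Suc 0) k"
    using assms pairs_below by (auto simp: arg_tuples_Suc_0)
  show "hd z < 2 * m" if "z \<in> {[2 * p], [2 * p + 1]}" for z
    using that assms by auto
  fix z i assume "z \<in> {[2 * p], [2 * p + 1]}" "i < Suc 0"
  then show "\<exists>a<k. z[i:=a] \<in> {[2 * p], [2 * p + 1]} \<and> hd (z[i:=a]) = partner (hd z)"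
    using assms pairs_below partner_double[OF assms]
    by (auto intro: exI[of _ "2 * p"] exI[of _ "2 * p + 1"])
qed

lemma component_family_unary: "component_family (Suc 0) hd unary_components"
proof (rule component_familyI)
  show "quasigroup_on (Suc 0) k hd" by (rule quasigroup_on_hd)
  fix K assume "K \<in> unary_components"
  then obtain p where p: "p < m" "K = {[2 * p], [2 * p + 1]}" unfolding unary_components_def by blast
  then show "K \<noteq> {} \<and> component (Suc 0) hd K \<and> (\<forall>z\<in>K. hd z div 2 = pair_class hd K)"
    using component_unary[OF p(1)] pair_class_unary[of p] by auto
next
  fix K K' z assume "K \<in> unary_components" "K' \<in> unary_components" and z: "z \<in> K" "z \<in> K'"
  then obtain p p' where K: "K = {[2 * p], [2 * p + 1]}" "K' = {[2 * p'], [2 * p' + 1]}"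
    unfolding unary_components_def by blast
  have "hd z div 2 = p" using z(1) unfolding K by auto
  moreover have "hd z div 2 = p'" using z(2) unfolding K by auto
  ultimately show "K = K'" using K by simp
qed

lemma card_unary_class: "p < m \<Longrightarrow> card {K \<in> unary_components. pair_class hd K = p} = 1"
proof -
  assume "p < m"
  then have "{K \<in> unary_components. pair_class hd K = p} = {{[2 * p], [2 * p + 1]}}"
    unfolding unary_components_def using pair_class_unary by auto
  then show ?thesis by simp
qed

lemma card_unary_components: "card unary_components = m"
proof -
  have "inj_on (\<lambda>p. {[2 * p], [2 * p + 1]}) {..<m}"
    by (rule inj_on_inverseI[where g = "pair_class hd"]) (rule pair_class_unary)
  then show ?thesis
    unfolding unary_components_def by (simp add: card_image)
qed

end

section \<open>Components of a composition\<close>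

lemma sum_card_classes_le:
  assumes "finite A" "finite B" "finite I" and "\<And>p c. (p, c) \<in> I \<Longrightarrow> P p c"
  shows "(\<Sum>(p, c)\<in>I. card {x \<in> A. f x = p} * card {y \<in> B. g y = c})
     \<le> card {(x, y) \<in> A \<times> B. P (f x) (g y)}"
proof -
  let ?S = "\<lambda>(p, c). {x \<in> A. f x = p} \<times> {y \<in> B. g y = c}"
  have "(\<Sum>(p, c)\<in>I. card {x \<in> A. f x = p} * card {y \<in> B. g y = c}) = (\<Sum>pc\<in>I. card (?S pc))"
    by (rule sum.cong) (auto simp: card_cartesian_product)
  also have "\<dots> = card (\<Union>pc\<in>I. ?S pc)"
    using assms(1-3) by (intro card_UN_disjoint[symmetric]) auto
  also have "\<dots> \<le> card {(x, y) \<in> A \<times> B. P (f x) (g y)}"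
    using assms by (intro card_mono) (auto intro: finite_subset[of _ "A \<times> B"])
  finally show ?thesis .
qed

context paired_symbols
begin

text \<open>On a block (pair \<open>p\<close>) \<open>\<times>\<close> (pair \<open>c\<close>) with \<open>good p c\<close>, the square \<open>q\<close> is a copy of the
  addition table of \<open>\<int>/2\<close> with values in the pair \<open>h p c\<close>.\<close>

definition respects_pairs :: "(nat \<Rightarrow> nat \<Rightarrow> nat) \<Rightarrow> (nat \<Rightarrow> nat \<Rightarrow> bool) \<Rightarrow> (nat \<Rightarrow> nat \<Rightarrow> nat) \<Rightarrow> bool" where
  "respects_pairs q good h \<longleftrightarrow> (\<forall>u<2 * m. \<forall>v<2 * m. good (u div 2) (v div 2) \<longrightarrow>
     q u v < 2 * m \<and> q u v div 2 = h (u div 2) (v div 2) \<and>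
     q (partner u) v = partner (q u v) \<and> q u (partner v) = partner (q u v))"

lemma respects_pairsD:
  assumes "respects_pairs q good h" "u < 2 * m" "v < 2 * m" "good (u div 2) (v div 2)"
  shows "q u v < 2 * m" "q u v div 2 = h (u div 2) (v div 2)"
    "q (partner u) v = partner (q u v)" "q u (partner v) = partner (q u v)"
  using assms unfolding respects_pairs_def by blast+

definition cell_component :: "(nat \<Rightarrow> nat \<Rightarrow> nat) \<Rightarrow> (nat \<times> nat) set \<Rightarrow> bool" where
  "cell_component q C \<longleftrightarrow> C \<subseteq> {0..<k} \<times> {0..<k} \<and> C \<noteq> {} \<and>
     (\<forall>u v. (u, v) \<in> C \<longrightarrow> q u v < 2 * m \<and>
        (\<exists>u'<k. (u', v) \<in> C \<and> q u' v = partner (q u v)) \<and>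
        (\<exists>v'<k. (u, v') \<in> C \<and> q u v' = partner (q u v)))"

definition cell_class :: "(nat \<Rightarrow> nat \<Rightarrow> nat) \<Rightarrow> (nat \<times> nat) set \<Rightarrow> nat" where
  "cell_class q C = (\<lambda>(u, v). q u v div 2) (SOME c. c \<in> C)"

text \<open>Cells avoid the blocks on which \<open>q\<close> respects pairs; this keeps their preimages apart
  from the product components below.\<close>

definition cell_family :: "(nat \<Rightarrow> nat \<Rightarrow> nat) \<Rightarrow> (nat \<Rightarrow> nat \<Rightarrow> bool) \<Rightarrow> (nat \<times> nat) set set \<Rightarrow> bool" where
  "cell_family q good Cs \<longleftrightarrow>
     (\<forall>C\<in>Cs. cell_component q C \<and> (\<forall>u v. (u, v) \<in> C \<longrightarrow>
        q u v div 2 = cell_class q C \<and> \<not> (u < 2 * m \<and> v < 2 * m \<and> good (u div 2) (v div 2)))) \<and>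
     pairwise disjnt Cs"

lemma cell_class_eqI: "C \<noteq> {} \<Longrightarrow> (\<And>u v. (u, v) \<in> C \<Longrightarrow> q u v div 2 = r) \<Longrightarrow> cell_class q C = r"
  unfolding cell_class_def by (metis (mono_tags, lifting) case_prod_beta some_in_eq prod.collapse)

lemma cell_componentD:
  assumes "cell_component q C" "(u, v) \<in> C"
  shows "u < k" "v < k" "q u v < 2 * m"
    "\<exists>u'<k. (u', v) \<in> C \<and> q u' v = partner (q u v)"
    "\<exists>v'<k. (u, v') \<in> C \<and> q u v' = partner (q u v)"
proof -
  have "(u, v) \<in> {0..<k} \<times> {0..<k}" and "q u v < 2 * m \<and>
      (\<exists>u'<k. (u', v) \<in> C \<and> q u' v = partner (q u v)) \<and>
      (\<exists>v'<k. (u, v') \<in> C \<and> q u v' = partner (q u v))"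
    using assms unfolding cell_component_def by blast+
  then show "u < k" "v < k" "q u v < 2 * m"
    "\<exists>u'<k. (u', v) \<in> C \<and> q u' v = partner (q u v)"
    "\<exists>v'<k. (u, v') \<in> C \<and> q u v' = partner (q u v)"
    by auto
qed

lemma cell_family_empty: "cell_family q good {}"
  by (simp add: cell_family_def)

context
  fixes q good Cs
  assumes cells: "cell_family q good Cs"
begin

lemma cell_family_component: "C \<in> Cs \<Longrightarrow> cell_component q C"
  using cells by (simp add: cell_family_def)

lemma cell_family_class: "C \<in> Cs \<Longrightarrow> (u, v) \<in> C \<Longrightarrow> q u v div 2 = cell_class q C"
  using cells by (simp add: cell_family_def)

lemma cell_family_avoids:
  "C \<in> Cs \<Longrightarrow> (u, v) \<in> C \<Longrightarrow> u < 2 * m \<Longrightarrow> v < 2 * m \<Longrightarrow> \<not> good (u div 2) (v div 2)"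
  using cells by (simp add: cell_family_def)

lemma cell_family_disjoint: "C \<in> Cs \<Longrightarrow> C' \<in> Cs \<Longrightarrow> c \<in> C \<Longrightarrow> c \<in> C' \<Longrightarrow> C = C'"
  using cells unfolding cell_family_def pairwise_def disjnt_def by blast

lemma finite_cell_family: "finite Cs"
  by (rule finite_subset[of _ "Pow ({0..<k} \<times> {0..<k})"])
     (use cell_family_component in \<open>auto simp: cell_component_def\<close>)

end

definition appends :: "nat list set \<Rightarrow> nat list set \<Rightarrow> nat list set" where
  "appends K L = {x @ y | x y. x \<in> K \<and> y \<in> L}"

definition cell_preimage ::
  "nat \<Rightarrow> nat \<Rightarrow> (nat list \<Rightarrow> nat) \<Rightarrow> (nat list \<Rightarrow> nat) \<Rightarrow> (nat \<times> nat) set \<Rightarrow> nat list set" where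
  "cell_preimage a b G H C =
     {x @ y | x y. x \<in> arg_tuples a k \<and> y \<in> arg_tuples b k \<and> (G x, H y) \<in> C}"

definition product_components :: "(nat list \<Rightarrow> nat) \<Rightarrow> nat list set set \<Rightarrow>
    (nat list \<Rightarrow> nat) \<Rightarrow> nat list set set \<Rightarrow> (nat \<Rightarrow> nat \<Rightarrow> bool) \<Rightarrow> nat list set set" where
  "product_components G KG H KH good =
     {appends K L | K L. K \<in> KG \<and> L \<in> KH \<and> good (pair_class G K) (pair_class H L)}"

definition cell_components :: "nat \<Rightarrow> nat \<Rightarrow> (nat list \<Rightarrow> nat) \<Rightarrow> (nat list \<Rightarrow> nat) \<Rightarrow>
    (nat \<times> nat) set set \<Rightarrow> nat list set set" where
  "cell_components a b G H Cs = cell_preimage a b G H ` Cs"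

context
  fixes a b G KG H KH
  assumes famG: "component_family a G KG" and famH: "component_family b H KH"
begin

lemma appends_nonempty:
  assumes "K \<in> KG" "L \<in> KH"
  shows "appends K L \<noteq> {}"
proof -
  obtain x y where "x \<in> K" "y \<in> L"
    using family_nonempty[OF famG assms(1)] family_nonempty[OF famH assms(2)] by blast
  then show ?thesis unfolding appends_def by blast
qed

lemma appends_meet:
  assumes "K \<in> KG" "K' \<in> KG" "L \<in> KH" "L' \<in> KH" "z \<in> appends K L" "z \<in> appends K' L'"
  shows "K = K' \<and> L = L'"
proof -
  obtain x y x' y' where "z = x @ y" "x \<in> K" "y \<in> L" "z = x' @ y'" "x' \<in> K'" "y' \<in> L'"
    using assms(5,6) unfolding appends_def by blast
  moreover from this have "x = x' \<and> y = y'"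
    using family_length[OF famG] assms(1,2) by simp
  ultimately show ?thesis
    using family_disjoint[OF famG assms(1,2)] family_disjoint[OF famH assms(3,4)] by blast
qed

lemma inj_on_appends: "inj_on (\<lambda>(K, L). appends K L) (KG \<times> KH)"
proof (rule inj_onI, clarify)
  fix K L K' L' assume KL: "K \<in> KG" "L \<in> KH" "K' \<in> KG" "L' \<in> KH" "appends K L = appends K' L'"
  then obtain z where "z \<in> appends K L" using appends_nonempty by blast
  then show "K = K' \<and> L = L'" using appends_meet KL by metis
qed

lemma product_components_switch:
  assumes "\<omega> \<subseteq> KG" "\<chi> \<subseteq> KH"
  shows "product_components (switch G \<omega>) KG (switch H \<chi>) KH good = product_components G KG H KH good"
  unfolding product_components_def
proof (rule Collect_cong)
  fix X
  show "(\<exists>K L. X = appends K L \<and> K \<in> KG \<and> L \<in> KH \<and>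
          good (pair_class (switch G \<omega>) K) (pair_class (switch H \<chi>) L)) \<longleftrightarrow>
        (\<exists>K L. X = appends K L \<and> K \<in> KG \<and> L \<in> KH \<and> good (pair_class G K) (pair_class H L))"
    using pair_class_switch[OF famG assms(1)] pair_class_switch[OF famH assms(2)] by metis
qed

lemma card_product_components:
  "card {(K, L) \<in> KG \<times> KH. good (pair_class G K) (pair_class H L)}
   \<le> card (product_components G KG H KH good)"
proof -
  let ?P = "{(K, L) \<in> KG \<times> KH. good (pair_class G K) (pair_class H L)}"
  have "inj_on (\<lambda>(K, L). appends K L) ?P"
    by (rule inj_on_subset[OF inj_on_appends]) auto
  then have "card ?P = card ((\<lambda>(K, L). appends K L) ` ?P)"
    by (simp add: card_image)
  also have "\<dots> \<le> card (product_components G KG H KH good)"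
  proof (rule card_mono)
    show "finite (product_components G KG H KH good)"
      by (rule finite_subset[of _ "(\<lambda>(K, L). appends K L) ` (KG \<times> KH)"])
         (auto simp: product_components_def finite_family[OF famG] finite_family[OF famH])
  qed (auto simp: product_components_def)
  finally show ?thesis .
qed

context
  fixes q good h
  assumes latin: "latin_square k q" and respects: "respects_pairs q good h"
begin

lemma compose_on_appends:
  assumes K: "K \<in> KG" and L: "L \<in> KH" and good: "good (pair_class G K) (pair_class H L)"
    and x: "x \<in> K" and y: "y \<in> L"
  shows "compose a q G H (x @ y) = q (G x) (H y)" "q (G x) (H y) < 2 * m"
    "q (G x) (H y) div 2 = h (pair_class G K) (pair_class H L)"
    "q (partner (G x)) (H y) = partner (q (G x) (H y))"
    "q (G x) (partner (H y)) = partner (q (G x) (H y))"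
  using compose_append[OF family_length[OF famG K x]]
    respects_pairsD[OF respects family_range[OF famG K x] family_range[OF famH L y]]
    family_class[OF famG K x] family_class[OF famH L y] good by simp_all

lemma component_appends:
  assumes K: "K \<in> KG" and L: "L \<in> KH" and good: "good (pair_class G K) (pair_class H L)"
  shows "component (a + b) (compose a q G H) (appends K L)"
proof (rule componentI)
  let ?F = "compose a q G H"
  note block = compose_on_appends[OF K L good]
  show "appends K L \<subseteq> arg_tuples (a + b) k"
    using component_subset[OF family_component[OF famG K]] component_subset[OF family_component[OF famH L]]
      append_in_arg_tuples unfolding appends_def by blast
  fix z assume "z \<in> appends K L"
  then obtain x y where z: "z = x @ y" "x \<in> K" "y \<in> L" unfolding appends_def by blast
  show "?F z < 2 * m" using z block(1,2) by simp
  fix i assume i: "i < a + b"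
  show "\<exists>c<k. z[i:=c] \<in> appends K L \<and> ?F (z[i:=c]) = partner (?F z)"
  proof (cases "i < a")
    case True
    then obtain c where c: "c < k" "x[i:=c] \<in> K" "G (x[i:=c]) = partner (G x)"
      using component_neighbour[OF family_component[OF famG K] z(2)] by blast
    have zc: "z[i:=c] = x[i:=c] @ y"
      using z True family_length[OF famG K] by (simp add: list_update_append1)
    have "z[i:=c] \<in> appends K L" using zc c(2) z(3) unfolding appends_def by blast
    moreover have "?F (z[i:=c]) = partner (?F z)"
      using zc c(2,3) z block(1,4) compose_on_appends(1)[OF K L good c(2) z(3)] by simp
    ultimately show ?thesis using c(1) by blast
  next
    case False
    then have "i - a < b" using i by simp
    then obtain c where c: "c < k" "y[i-a:=c] \<in> L" "H (y[i-a:=c]) = partner (H y)"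
      using component_neighbour[OF family_component[OF famH L] z(3)] by blast
    have zc: "z[i:=c] = x @ y[i-a:=c]"
      using z False family_length[OF famG K] by (simp add: list_update_append)
    have "z[i:=c] \<in> appends K L" using zc c(2) z(2) unfolding appends_def by blast
    moreover have "?F (z[i:=c]) = partner (?F z)"
      using zc c(3) z block(1,5) compose_on_appends(1)[OF K L good z(2) c(2)] by simp
    ultimately show ?thesis using c(1) by blast
  qed
qed

lemma compose_div_appends:
  assumes "K \<in> KG" "L \<in> KH" "good (pair_class G K) (pair_class H L)" "z \<in> appends K L"
  shows "compose a q G H z div 2 = h (pair_class G K) (pair_class H L)"
  using assms(4) compose_on_appends[OF assms(1-3)] unfolding appends_def by auto

lemma pair_class_appends:
  assumes "K \<in> KG" "L \<in> KH" "good (pair_class G K) (pair_class H L)"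
  shows "pair_class (compose a q G H) (appends K L) = h (pair_class G K) (pair_class H L)"
  using pair_class_eqI[OF appends_nonempty[OF assms(1,2)]] compose_div_appends[OF assms] .

context
  fixes Cs
  assumes cells: "cell_family q good Cs" and arity_pos: "0 < a" "0 < b"
begin

lemma cell_preimage_nonempty:
  assumes "C \<in> Cs"
  shows "cell_preimage a b G H C \<noteq> {}"
proof -
  note cC = cell_family_component[OF cells assms]
  obtain u v where uv: "(u, v) \<in> C" using cC unfolding cell_component_def by auto
  obtain x where "x \<in> arg_tuples a k" "G x = u"
    using quasigroup_on_surj[OF family_quasigroup[OF famG] arity_pos(1) cell_componentD(1)[OF cC uv]]
    by blast
  moreover obtain y where "y \<in> arg_tuples b k" "H y = v"
    using quasigroup_on_surj[OF family_quasigroup[OF famH] arity_pos(2) cell_componentD(2)[OF cC uv]]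
    by blast
  ultimately show ?thesis using uv unfolding cell_preimage_def by blast
qed

lemma component_cell_preimage:
  assumes C: "C \<in> Cs"
  shows "component (a + b) (compose a q G H) (cell_preimage a b G H C)"
proof (rule componentI)
  let ?F = "compose a q G H" and ?R = "cell_preimage a b G H C"
  note qG = family_quasigroup[OF famG] and qH = family_quasigroup[OF famH]
  note cC = cell_family_component[OF cells C]
  have F: "?F (x @ y) = q (G x) (H y)" if "x \<in> arg_tuples a k" for x y
    using compose_append length_arg_tuples[OF that] by blast
  show "?R \<subseteq> arg_tuples (a + b) k"
    using append_in_arg_tuples unfolding cell_preimage_def by blast
  fix z assume "z \<in> ?R"
  then obtain x y where z: "z = x @ y" "x \<in> arg_tuples a k" "y \<in> arg_tuples b k" "(G x, H y) \<in> C"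
    unfolding cell_preimage_def by blast
  show "?F z < 2 * m" using z F cell_componentD(3)[OF cC z(4)] by simp
  fix i assume i: "i < a + b"
  show "\<exists>c<k. z[i:=c] \<in> ?R \<and> ?F (z[i:=c]) = partner (?F z)"
  proof (cases "i < a")
    case True
    obtain u' where u': "u' < k" "(u', H y) \<in> C" "q u' (H y) = partner (q (G x) (H y))"
      using cell_componentD(4)[OF cC z(4)] by blast
    obtain c where c: "c < k" "G (x[i:=c]) = u'"
      using quasigroup_on_line_surj[OF qG True z(2) u'(1)] by blast
    have zc: "z[i:=c] = x[i:=c] @ y"
      using z True length_arg_tuples[OF z(2)] by (simp add: list_update_append1)
    have "z[i:=c] \<in> ?R"
      using zc arg_tuples_update[OF z(2) c(1)] z(3) c(2) u'(2) unfolding cell_preimage_def by blast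
    moreover have "?F (z[i:=c]) = partner (?F z)"
      using zc F[OF arg_tuples_update[OF z(2) c(1)]] F[OF z(2)] c(2) u'(3) z(1) by simp
    ultimately show ?thesis using c(1) by blast
  next
    case False
    then have "i - a < b" using i by simp
    obtain v' where v': "v' < k" "(G x, v') \<in> C" "q (G x) v' = partner (q (G x) (H y))"
      using cell_componentD(5)[OF cC z(4)] by blast
    obtain c where c: "c < k" "H (y[i-a:=c]) = v'"
      using quasigroup_on_line_surj[OF qH \<open>i - a < b\<close> z(3) v'(1)] by blast
    have zc: "z[i:=c] = x @ y[i-a:=c]"
      using z False length_arg_tuples[OF z(2)] by (simp add: list_update_append)
    have "z[i:=c] \<in> ?R"
      using zc arg_tuples_update[OF z(3) c(1)] z(2) c(2) v'(2) unfolding cell_preimage_def by blast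
    moreover have "?F (z[i:=c]) = partner (?F z)"
      using zc F[OF z(2)] c(2) v'(3) z(1) by simp
    ultimately show ?thesis using c(1) by blast
  qed
qed

lemma compose_div_cell_preimage:
  assumes "C \<in> Cs" "z \<in> cell_preimage a b G H C"
  shows "compose a q G H z div 2 = cell_class q C"
proof -
  obtain x y where "z = x @ y" "x \<in> arg_tuples a k" "(G x, H y) \<in> C"
    using assms(2) unfolding cell_preimage_def by blast
  then show ?thesis
    using compose_append[OF length_arg_tuples] cell_family_class[OF cells assms(1)] by simp
qed

lemma pair_class_cell_preimage:
  "C \<in> Cs \<Longrightarrow> pair_class (compose a q G H) (cell_preimage a b G H C) = cell_class q C"
  by (rule pair_class_eqI[OF cell_preimage_nonempty compose_div_cell_preimage])

lemma cell_preimage_meet: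
  "C \<in> Cs \<Longrightarrow> C' \<in> Cs \<Longrightarrow> z \<in> cell_preimage a b G H C \<Longrightarrow> z \<in> cell_preimage a b G H C' \<Longrightarrow> C = C'"
  unfolding cell_preimage_def using cell_family_disjoint[OF cells] length_arg_tuples
  by (smt (verit) append_eq_append_conv mem_Collect_eq)

lemma inj_on_cell_preimage: "inj_on (cell_preimage a b G H) Cs"
proof (rule inj_onI)
  fix C C' assume "C \<in> Cs" "C' \<in> Cs" "cell_preimage a b G H C = cell_preimage a b G H C'"
  moreover from this obtain z where "z \<in> cell_preimage a b G H C"
    using cell_preimage_nonempty by blast
  ultimately show "C = C'" using cell_preimage_meet by auto
qed

lemma appends_cell_preimage_disjoint:
  assumes K: "K \<in> KG" and L: "L \<in> KH" and good: "good (pair_class G K) (pair_class H L)"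
    and C: "C \<in> Cs" and z: "z \<in> appends K L" "z \<in> cell_preimage a b G H C"
  shows False
proof -
  obtain x y where xy: "z = x @ y" "x \<in> K" "y \<in> L" using z(1) unfolding appends_def by blast
  obtain x' y' where xy': "z = x' @ y'" "x' \<in> arg_tuples a k" "(G x', H y') \<in> C"
    using z(2) unfolding cell_preimage_def by blast
  have "(G x, H y) \<in> C"
    using xy xy' family_length[OF famG K xy(2)] length_arg_tuples[OF xy'(2)] by simp
  moreover have "good (G x div 2) (H y div 2)"
    using good family_class[OF famG K xy(2)] family_class[OF famH L xy(3)] by simp
  ultimately show False
    using cell_family_avoids[OF cells C] family_range[OF famG K xy(2)] family_range[OF famH L xy(3)]
    by blast
qed

lemma appends_neq_cell_preimage:
  assumes "K \<in> KG" "L \<in> KH" "good (pair_class G K) (pair_class H L)" "C \<in> Cs"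
  shows "appends K L \<noteq> cell_preimage a b G H C"
proof
  assume eq: "appends K L = cell_preimage a b G H C"
  obtain z where "z \<in> appends K L" using appends_nonempty assms(1,2) by blast
  then show False using appends_cell_preimage_disjoint[OF assms] eq by simp
qed

lemma compose_componentE:
  assumes "X \<in> product_components G KG H KH good \<union> cell_components a b G H Cs"
  obtains K L where "X = appends K L" "K \<in> KG" "L \<in> KH" "good (pair_class G K) (pair_class H L)"
  | C where "X = cell_preimage a b G H C" "C \<in> Cs"
  using assms unfolding product_components_def cell_components_def by blast

lemma compose_components_disjoint:
  assumes "X \<in> product_components G KG H KH good \<union> cell_components a b G H Cs"
    and "X' \<in> product_components G KG H KH good \<union> cell_components a b G H Cs"
    and z: "z \<in> X" "z \<in> X'"
  shows "X = X'"
  using assms(1)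
proof (cases rule: compose_componentE)
  case (1 K L)
  note X_product = 1
  from assms(2) show ?thesis
  proof (cases rule: compose_componentE)
    case (1 K' L')
    then have "K = K' \<and> L = L'"
      using appends_meet[OF X_product(2) 1(2) X_product(3) 1(3)] z X_product(1) by blast
    then show ?thesis using X_product(1) 1(1) by simp
  next
    case 2
    then show ?thesis using X_product appends_cell_preimage_disjoint z by blast
  qed
next
  case (2 C)
  note X_cell = 2
  from assms(2) show ?thesis
  proof (cases rule: compose_componentE)
    case 1
    then show ?thesis using X_cell appends_cell_preimage_disjoint z by blast
  next
    case (2 C')
    then have "C = C'"
      using cell_preimage_meet[OF X_cell(2) 2(2)] z X_cell(1) by blast
    then show ?thesis using X_cell(1) 2(1) by simp
  qed
qed

theorem component_family_compose:
  "component_family (a + b) (compose a q G H)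
     (product_components G KG H KH good \<union> cell_components a b G H Cs)"
proof (rule component_familyI)
  show "quasigroup_on (a + b) k (compose a q G H)"
    using quasigroup_on_compose[OF family_quasigroup[OF famG] family_quasigroup[OF famH] latin] .
next
  fix X assume "X \<in> product_components G KG H KH good \<union> cell_components a b G H Cs"
  then show "X \<noteq> {} \<and> component (a + b) (compose a q G H) X \<and>
      (\<forall>z\<in>X. compose a q G H z div 2 = pair_class (compose a q G H) X)"
  proof (cases rule: compose_componentE)
    case 1
    then show ?thesis
      using appends_nonempty component_appends compose_div_appends pair_class_appends by simp
  next
    case 2
    then show ?thesis
      using cell_preimage_nonempty component_cell_preimage compose_div_cell_preimage
        pair_class_cell_preimage by simp
  qed
qed (rule compose_components_disjoint)

theorem card_class_compose:
  "card {(K, L) \<in> KG \<times> KH. good (pair_class G K) (pair_class H L) \<and> h (pair_class G K) (pair_class H L) = r}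
     + card {C \<in> Cs. cell_class q C = r}
   \<le> card {X \<in> product_components G KG H KH good \<union> cell_components a b G H Cs.
       pair_class (compose a q G H) X = r}"
proof -
  let ?F = "compose a q G H"
  let ?P = "{(K, L) \<in> KG \<times> KH. good (pair_class G K) (pair_class H L) \<and> h (pair_class G K) (pair_class H L) = r}"
  let ?R = "{C \<in> Cs. cell_class q C = r}"
  let ?A = "(\<lambda>(K, L). appends K L) ` ?P" and ?B = "cell_preimage a b G H ` ?R"
  let ?T = "{X \<in> product_components G KG H KH good \<union> cell_components a b G H Cs.
      pair_class ?F X = r}"
  have "?A \<inter> ?B = {}"
    using appends_neq_cell_preimage by fastforce
  moreover have "?A \<subseteq> ?T"
  proof
    fix X assume "X \<in> ?A"
    then obtain K L where "X = appends K L" "K \<in> KG" "L \<in> KH"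
      "good (pair_class G K) (pair_class H L)" "h (pair_class G K) (pair_class H L) = r"
      by force
    then show "X \<in> ?T"
      using pair_class_appends unfolding product_components_def by blast
  qed
  moreover have "?B \<subseteq> ?T"
  proof
    fix X assume "X \<in> ?B"
    then obtain C where "X = cell_preimage a b G H C" "C \<in> Cs" "cell_class q C = r"
      by blast
    then show "X \<in> ?T"
      using pair_class_cell_preimage unfolding cell_components_def by blast
  qed
  moreover have "finite ?P"
    using finite_family[OF famG] finite_family[OF famH] by (auto intro: finite_subset[of _ "KG \<times> KH"])
  ultimately have "card ?A + card ?B \<le> card ?T"
    using finite_cell_family[OF cells] finite_family[OF component_family_compose]
    by (simp add: card_Un_disjoint[symmetric] card_mono)
  moreover have "inj_on (\<lambda>(K, L). appends K L) ?P" "inj_on (cell_preimage a b G H) ?R"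
    by (rule inj_on_subset[OF inj_on_appends], force) (rule inj_on_subset[OF inj_on_cell_preimage], auto)
  then have "card ?A = card ?P" "card ?B = card ?R"
    by (simp_all add: card_image)
  ultimately show ?thesis by simp
qed

end

end

end

end

section \<open>Switching the factors of a composition\<close>

context paired_symbols
begin

context
  fixes a b G KG H KH q good h
  assumes famG: "component_family a G KG" and famH: "component_family b H KH"
    and latin: "latin_square k q" and respects: "respects_pairs q good h"
    and arity_pos: "0 < a" "0 < b"
begin

lemma component_family_compose_switch:
  assumes "\<omega> \<subseteq> KG" "\<chi> \<subseteq> KH"
  shows "component_family (a + b) (compose a q (switch G \<omega>) (switch H \<chi>))
    (product_components G KG H KH good)"
  using component_family_compose[OF component_family_switch[OF famG assms(1)]
      component_family_switch[OF famH assms(2)] latin respects cell_family_empty arity_pos]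
    product_components_switch[OF famG famH assms]
  by (simp add: cell_components_def)

text \<open>A point \<open>x\<close> with \<open>G x = 2 * m\<close> lies in no component, so the composition restricted
  to the line \<open>{x} \<times> arg_tuples b k\<close> is a row of \<open>q\<close> applied to \<open>H\<close>; this recovers
  the switch applied to \<open>H\<close>, and symmetrically the one applied to \<open>G\<close>.\<close>

lemma switch_compose_left_free:
  assumes x: "x \<in> arg_tuples a k" "G x = 2 * m" and "\<omega> \<subseteq> KG"
    and S: "S \<subseteq> product_components G KG H KH good"
  shows "switch (compose a q (switch G \<omega>) H') S (x @ y) = q (G x) (H' y)"
proof -
  have free: "x \<notin> K" if "K \<in> KG" for K
    using family_range[OF famG that, of x] x(2) by auto
  have "x @ y \<notin> X" if X: "X \<in> product_components G KG H KH good" for X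
  proof
    assume "x @ y \<in> X"
    then obtain K x' y' where "K \<in> KG" "x' \<in> K" "x @ y = x' @ y'"
      using X unfolding product_components_def appends_def by blast
    then show False
      using free family_length[OF famG] length_arg_tuples[OF x(1)] by auto
  qed
  then have "x @ y \<notin> \<Union>S" using S by blast
  moreover have "switch G \<omega> x = G x"
    using free \<open>\<omega> \<subseteq> KG\<close> unfolding switch_def by auto
  ultimately show ?thesis
    using compose_append[OF length_arg_tuples[OF x(1)]] unfolding switch_def by simp
qed

lemma switch_compose_right_free:
  assumes y: "y \<in> arg_tuples b k" "H y = 2 * m" and "\<chi> \<subseteq> KH"
    and S: "S \<subseteq> product_components G KG H KH good" and "length x = a"
  shows "switch (compose a q G' (switch H \<chi>)) S (x @ y) = q (G' x) (H y)"
proof -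
  have free: "y \<notin> L" if "L \<in> KH" for L
    using family_range[OF famH that, of y] y(2) by auto
  have "x @ y \<notin> X" if X: "X \<in> product_components G KG H KH good" for X
  proof
    assume "x @ y \<in> X"
    then obtain K L x' y' where "K \<in> KG" "x' \<in> K" "L \<in> KH" "y' \<in> L" "x @ y = x' @ y'"
      using X unfolding product_components_def appends_def by blast
    then show False
      using free family_length[OF famG] \<open>length x = a\<close> by auto
  qed
  then have "x @ y \<notin> \<Union>S" using S by blast
  moreover have "switch H \<chi> y = H y"
    using free \<open>\<chi> \<subseteq> KH\<close> unfolding switch_def by auto
  ultimately show ?thesis
    using compose_append[OF \<open>length x = a\<close>] unfolding switch_def by simp
qed

lemma switch_compose_inj:
  assumes t: "\<omega> \<subseteq> KG" "\<chi> \<subseteq> KH" "S \<subseteq> product_components G KG H KH good"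
    and t': "\<omega>' \<subseteq> KG" "\<chi>' \<subseteq> KH" "S' \<subseteq> product_components G KG H KH good"
    and eq: "\<And>z. z \<in> arg_tuples (a + b) k \<Longrightarrow>
      switch (compose a q (switch G \<omega>) (switch H \<chi>)) S z = switch (compose a q (switch G \<omega>') (switch H \<chi>')) S' z"
  shows "\<omega> = \<omega>' \<and> \<chi> = \<chi>' \<and> S = S'"
proof -
  obtain x0 where x0: "x0 \<in> arg_tuples a k" "G x0 = 2 * m"
    using quasigroup_on_surj[OF family_quasigroup[OF famG] arity_pos(1) pairs_below] by blast
  obtain y0 where y0: "y0 \<in> arg_tuples b k" "H y0 = 2 * m"
    using quasigroup_on_surj[OF family_quasigroup[OF famH] arity_pos(2) pairs_below] by blast
  have "\<chi> = \<chi>'"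
  proof (rule switch_inj[OF famH t(2) t'(2)])
    fix y assume y: "y \<in> arg_tuples b k"
    have "q (2 * m) (switch H \<chi> y) = q (2 * m) (switch H \<chi>' y)"
      using eq[OF append_in_arg_tuples[OF x0(1) y]] x0
        switch_compose_left_free[OF x0 t(1,3)] switch_compose_left_free[OF x0 t'(1,3)] by simp
    then show "switch H \<chi> y = switch H \<chi>' y"
      using latin_square_row_inj[OF latin pairs_below] y
        quasigroup_on_range[OF quasigroup_on_switch[OF famH t(2)]]
        quasigroup_on_range[OF quasigroup_on_switch[OF famH t'(2)]] by blast
  qed
  moreover have "\<omega> = \<omega>'"
  proof (rule switch_inj[OF famG t(1) t'(1)])
    fix x assume x: "x \<in> arg_tuples a k"
    have "q (switch G \<omega> x) (2 * m) = q (switch G \<omega>' x) (2 * m)"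
      using eq[OF append_in_arg_tuples[OF x y0(1)]] y0 length_arg_tuples[OF x]
        switch_compose_right_free[OF y0 t(2,3)] switch_compose_right_free[OF y0 t'(2,3)] by simp
    then show "switch G \<omega> x = switch G \<omega>' x"
      using latin_square_col_inj[OF latin pairs_below] x
        quasigroup_on_range[OF quasigroup_on_switch[OF famG t(1)]]
        quasigroup_on_range[OF quasigroup_on_switch[OF famG t'(1)]] by blast
  qed
  moreover have "S = S'"
    using switch_inj[OF component_family_compose_switch[OF t(1,2)] t(3) t'(3)] eq calculation by simp
  ultimately show ?thesis by simp
qed

theorem two_pow_card_le_Q_compose:
  "2 ^ (card KG + card KH + card (product_components G KG H KH good)) \<le> Q (a + b) k"
proof -
  let ?P = "product_components G KG H KH good"
  let ?A = "Pow KG \<times> Pow KH \<times> Pow ?P"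
  have fin: "finite KG" "finite KH" "finite ?P"
    using finite_family[OF famG] finite_family[OF famH]
      finite_family[OF component_family_compose_switch[of "{}" "{}"]] by auto
  have "card ?A \<le> Q (a + b) k"
  proof (rule card_le_Q[where F = "\<lambda>(\<omega>, \<chi>, S). switch (compose a q (switch G \<omega>) (switch H \<chi>)) S"])
    show "finite ?A" using fin by simp
    show "quasigroup_on (a + b) k ((\<lambda>(\<omega>, \<chi>, S). switch (compose a q (switch G \<omega>) (switch H \<chi>)) S) t)"
      if "t \<in> ?A" for t
      using that quasigroup_on_switch[OF component_family_compose_switch] by auto
  next
    fix t t' assume "t \<in> ?A" "t' \<in> ?A"
    then obtain \<omega> \<chi> S \<omega>' \<chi>' S' where t: "t = (\<omega>, \<chi>, S)" "\<omega> \<subseteq> KG" "\<chi> \<subseteq> KH" "S \<subseteq> ?P"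
      and t': "t' = (\<omega>', \<chi>', S')" "\<omega>' \<subseteq> KG" "\<chi>' \<subseteq> KH" "S' \<subseteq> ?P"
      by auto
    assume "\<And>z. z \<in> arg_tuples (a + b) k \<Longrightarrow>
      (\<lambda>(\<omega>, \<chi>, S). switch (compose a q (switch G \<omega>) (switch H \<chi>)) S) t z =
      (\<lambda>(\<omega>, \<chi>, S). switch (compose a q (switch G \<omega>) (switch H \<chi>)) S) t' z"
    then show "t = t'"
      using switch_compose_inj[OF t(2-4) t'(2-4)] t(1) t'(1) by simp
  qed
  moreover have "card ?A = 2 ^ (card KG + card KH + card ?P)"
    using fin by (simp add: card_cartesian_product card_Pow power_add)
  ultimately show ?thesis by simp
qed

end

end

section \<open>Prolonging a Latin square along a transversal\<close>

text \<open>Each entry \<open>H a c\<close> is inflated to a \<open>2 \<times> 2\<close> block on the pair \<open>H a c\<close>. In the blocks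
  along the transversal \<open>(a, tau a)\<close> both symbols of the pair sit on the diagonal and the new
  symbol \<open>2 * m\<close> off the diagonal; the displaced symbols fill the new row and column \<open>2 * m\<close>.\<close>

definition prolongation :: "nat \<Rightarrow> (nat \<Rightarrow> nat \<Rightarrow> nat) \<Rightarrow> (nat \<Rightarrow> nat) \<Rightarrow> nat \<Rightarrow> nat \<Rightarrow> nat" where
  "prolongation m H tau u v =
     (if u < 2 * m \<and> v < 2 * m then
        if v div 2 \<noteq> tau (u div 2)
        then 2 * H (u div 2) (v div 2) + (if u mod 2 = v mod 2 then 0 else 1)
        else if u mod 2 = v mod 2 then 2 * H (u div 2) (v div 2) + u mod 2 else 2 * m
      else if u < 2 * m then 2 * H (u div 2) (tau (u div 2)) + (1 - u mod 2)
      else if v < 2 * m then 2 * H (the_inv_into {0..<m} tau (v div 2)) (v div 2) + (1 - v mod 2)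
      else 2 * m)"

locale transversal_square =
  fixes m :: nat and H :: "nat \<Rightarrow> nat \<Rightarrow> nat" and tau :: "nat \<Rightarrow> nat"
  assumes latin: "latin_square m H"
    and tau_bij: "bij_betw tau {0..<m} {0..<m}"
    and transversal_bij: "bij_betw (\<lambda>a. H a (tau a)) {0..<m} {0..<m}"
begin

sublocale paired_symbols m "2 * m + 1"
  by unfold_locales simp

abbreviation tau_inv :: "nat \<Rightarrow> nat" where
  "tau_inv \<equiv> the_inv_into {0..<m} tau"

abbreviation prolonged :: "nat \<Rightarrow> nat \<Rightarrow> nat" where
  "prolonged \<equiv> prolongation m H tau"

lemma H_less: "a < m \<Longrightarrow> c < m \<Longrightarrow> H a c < m"
  using latin_square_range[OF latin] .

lemma tau_less: "a < m \<Longrightarrow> tau a < m"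
  using bij_betwE[OF tau_bij] by auto

lemma tau_inv: "c < m \<Longrightarrow> tau_inv c < m \<and> tau (tau_inv c) = c"
  using bij_betwE[OF bij_betw_the_inv_into[OF tau_bij]] f_the_inv_into_f_bij_betw[OF tau_bij]
  by auto

lemma tau_inv_tau: "a < m \<Longrightarrow> tau_inv (tau a) = a"
  using the_inv_into_f_f[OF bij_betw_imp_inj_on[OF tau_bij]] by simp

lemma transversal_surj:
  assumes "r < m"
  shows "\<exists>a<m. H a (tau a) = r"
proof -
  have "r \<in> (\<lambda>a. H a (tau a)) ` {0..<m}"
    using bij_betw_imp_surj_on[OF transversal_bij] assms by simp
  then show ?thesis by auto
qed

lemma transversal_inj:
  assumes "a < m" "a' < m" "H a (tau a) = H a' (tau a')"
  shows "a = a'"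
  using inj_onD[OF bij_betw_imp_inj_on[OF transversal_bij], of a a'] assms by simp

lemma transversal_square_transpose: "transversal_square m (\<lambda>c a. H a c) tau_inv"
proof
  show "latin_square m (\<lambda>c a. H a c)" using latin_square_transpose[OF latin] .
  show "bij_betw tau_inv {0..<m} {0..<m}" using bij_betw_the_inv_into[OF tau_bij] .
  have "bij_betw ((\<lambda>a. H a (tau a)) \<circ> tau_inv) {0..<m} {0..<m}"
    using bij_betw_the_inv_into[OF tau_bij] transversal_bij by (rule bij_betw_trans)
  then show "bij_betw (\<lambda>c. H (tau_inv c) c) {0..<m} {0..<m}"
    by (rule bij_betw_cong[THEN iffD1, rotated]) (simp add: tau_inv)
qed

lemma prolongation_transpose: "prolongation m (\<lambda>c a. H a c) tau_inv v u = prolonged u v"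
proof -
  have inv_inv: "the_inv_into {0..<m} tau_inv a = tau a" if "a < m" for a
    by (rule the_inv_into_f_eq[OF bij_betw_imp_inj_on[OF bij_betw_the_inv_into[OF tau_bij]]])
       (use tau_inv_tau tau_less that in auto)
  have swap: "a = tau_inv c \<longleftrightarrow> c = tau a" if "a < m" "c < m" for a c
    using tau_inv tau_inv_tau that by auto
  show ?thesis
    unfolding prolongation_def
    using swap[of "u div 2" "v div 2"] inv_inv[of "u div 2"] by (auto simp: less_mult_imp_div_less)
qed

lemma symbol_cases:
  assumes "u < 2 * m + 1"
  obtains "u = 2 * m" | a b where "a < m" "b < 2" "u = 2 * a + b"
proof (cases "u = 2 * m")
  case False
  then have "u div 2 < m" "u mod 2 < 2" "u = 2 * (u div 2) + u mod 2" using assms by auto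
  then show ?thesis using that(2) by blast
qed

lemma prolonged_blocks:
  assumes "a < m" "b < 2" "c < m" "d < 2"
  shows "prolonged (2 * a + b) (2 * c + d) =
    (if c \<noteq> tau a then 2 * H a c + (if b = d then 0 else 1)
     else if b = d then 2 * H a c + b else 2 * m)"
  using assms unfolding prolongation_def by auto

lemma prolonged_last_col: "a < m \<Longrightarrow> b < 2 \<Longrightarrow> prolonged (2 * a + b) (2 * m) = 2 * H a (tau a) + (1 - b)"
  unfolding prolongation_def by auto

lemma prolonged_last_row: "c < m \<Longrightarrow> d < 2 \<Longrightarrow> prolonged (2 * m) (2 * c + d) = 2 * H (tau_inv c) c + (1 - d)"
  unfolding prolongation_def by auto

lemma prolonged_corner: "prolonged (2 * m) (2 * m) = 2 * m"
  unfolding prolongation_def by simp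

lemma prolonged_less:
  assumes "u < 2 * m + 1" "v < 2 * m + 1"
  shows "prolonged u v < 2 * m + 1"
proof -
  have pair: "2 * x + e < 2 * m + 1" if "x < m" "e \<le> 1" for x e :: nat
    using that by linarith
  from assms(1) show ?thesis
  proof (cases rule: symbol_cases)
    case 1
    from assms(2) show ?thesis
    proof (cases rule: symbol_cases)
      case (2 c d)
      have "prolonged u v = 2 * H (tau_inv c) c + (1 - d)"
        using prolonged_last_row[OF 2(1,2)] \<open>u = 2 * m\<close> 2(3) by simp
      moreover have "2 * H (tau_inv c) c + (1 - d) < 2 * m + 1"
        using pair[OF H_less[OF conjunct1[OF tau_inv[OF 2(1)]] 2(1)], of "1 - d"] by simp
      ultimately show ?thesis by simp
    qed (simp add: 1 prolonged_corner)
  next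
    case (2 a b)
    from assms(2) show ?thesis
    proof (cases rule: symbol_cases)
      case 1
      have "prolonged u v = 2 * H a (tau a) + (1 - b)"
        using prolonged_last_col[OF 2(1,2)] 1 2(3) by simp
      moreover have "2 * H a (tau a) + (1 - b) < 2 * m + 1"
        using pair[OF H_less[OF 2(1) tau_less[OF 2(1)]], of "1 - b"] by simp
      ultimately show ?thesis by simp
    next
      case (2 c d)
      note val = prolonged_blocks[OF \<open>a < m\<close> \<open>b < 2\<close> 2(1,2)]
      note bound = pair[OF H_less[OF \<open>a < m\<close> \<open>c < m\<close>]]
      show ?thesis
      proof (cases "c = tau a \<and> b = d")
        case True
        then show ?thesis using val bound[of b] \<open>b < 2\<close> \<open>u = 2 * a + b\<close> 2(3) by simp
      next
        case False
        then show ?thesis using val bound[of 0] bound[of 1] \<open>u = 2 * a + b\<close> 2(3) by auto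
      qed
    qed
  qed
qed

lemma prolonged_last_row_surj:
  assumes "w < 2 * m + 1"
  shows "\<exists>v<2 * m + 1. prolonged (2 * m) v = w"
  using assms
proof (cases rule: symbol_cases)
  case 1
  then show ?thesis using prolonged_corner by auto
next
  case (2 r e)
  then obtain a where a: "a < m" "H a (tau a) = r" using transversal_surj by blast
  then have "prolonged (2 * m) (2 * tau a + (1 - e)) = w"
    using prolonged_last_row[OF tau_less[OF a(1)], of "1 - e"] 2 tau_inv_tau by auto
  moreover have "2 * tau a + (1 - e) < 2 * m + 1" using tau_less[OF a(1)] by simp
  ultimately show ?thesis by blast
qed

lemma prolonged_block_row_surj:
  assumes a: "a < m" and b: "b < 2" and w: "w < 2 * m + 1"
  shows "\<exists>v<2 * m + 1. prolonged (2 * a + b) v = w"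
proof -
  note blocks = prolonged_blocks[OF a b] and t = tau_less[OF a]
  have pair: "2 * x + e < 2 * m + 1" if "x < m" "e \<le> 1" for x e :: nat
    using that by linarith
  from w show ?thesis
  proof (cases rule: symbol_cases)
    case 1
    have "b \<noteq> 1 - b" using b by arith
    then have "prolonged (2 * a + b) (2 * tau a + (1 - b)) = w" using blocks[OF t, of "1 - b"] 1 by auto
    then show ?thesis using pair[OF t, of "1 - b"] by auto
  next
    case (2 r e)
    show ?thesis
    proof (cases "r = H a (tau a)")
      case True
      show ?thesis
      proof (cases "e = b")
        case True
        then have "prolonged (2 * a + b) (2 * tau a + b) = w"
          using blocks[OF t b] 2 \<open>r = H a (tau a)\<close> by simp
        then show ?thesis using pair[OF t, of b] b by auto
      next
        case False
        then have "e = 1 - b" using \<open>e < 2\<close> b by arith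
        then have "prolonged (2 * a + b) (2 * m) = w"
          using prolonged_last_col[OF a b] 2 \<open>r = H a (tau a)\<close> by simp
        then show ?thesis by auto
      qed
    next
      case False
      obtain c where c: "c < m" "H a c = r"
        using latin_square_row_surj[OF latin a \<open>r < m\<close>] by blast
      with False have "c \<noteq> tau a" by auto
      define d where "d = (if e = 0 then b else 1 - b)"
      have "d < 2" using b by (simp add: d_def, arith)
      have "(if b = d then 0 else 1) = e"
        using \<open>e < 2\<close> b unfolding d_def by (cases "e = 0"; cases "b = 0") auto
      then have "prolonged (2 * a + b) (2 * c + d) = w"
        using blocks[OF c(1) \<open>d < 2\<close>] \<open>c \<noteq> tau a\<close> c(2) 2 by simp
      then show ?thesis using pair[OF c(1), of d] \<open>d < 2\<close> by auto
    qed
  qed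
qed

lemma prolonged_row_surj:
  assumes "u < 2 * m + 1" "w < 2 * m + 1"
  shows "\<exists>v<2 * m + 1. prolonged u v = w"
  using assms(1)
proof (cases rule: symbol_cases)
  case 1
  then show ?thesis using prolonged_last_row_surj[OF assms(2)] by simp
next
  case (2 a b)
  then show ?thesis using prolonged_block_row_surj[OF 2(1,2) assms(2)] by simp
qed

lemma bij_betw_prolonged_row:
  "u < 2 * m + 1 \<Longrightarrow> bij_betw (prolonged u) {0..<2 * m + 1} {0..<2 * m + 1}"
  using prolonged_less prolonged_row_surj by (intro bij_betw_atLeast0LessThan_if_surj)

lemma latin_square_prolonged: "latin_square (2 * m + 1) prolonged"
proof -
  interpret transposed: transversal_square m "\<lambda>c a. H a c" tau_inv
    by (rule transversal_square_transpose)
  have "bij_betw (\<lambda>u. prolonged u v) {0..<2 * m + 1} {0..<2 * m + 1}" if "v < 2 * m + 1" for v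
  proof -
    have "(\<lambda>u. prolonged u v) = prolongation m (\<lambda>c a. H a c) tau_inv v"
      by (simp add: prolongation_transpose fun_eq_iff)
    then show ?thesis using transposed.bij_betw_prolonged_row[OF that] by simp
  qed
  then show ?thesis
    unfolding latin_square_def using bij_betw_prolonged_row by simp
qed

lemma respects_pairs_prolonged: "respects_pairs prolonged (\<lambda>a c. c \<noteq> tau a) H"
  unfolding respects_pairs_def
proof (intro allI impI)
  fix u v assume u: "u < 2 * m" and v: "v < 2 * m" and good: "v div 2 \<noteq> tau (u div 2)"
  define a b c d where "a = u div 2" "b = u mod 2" "c = v div 2" "d = v mod 2"
  have ab: "a < m" "b < 2" "u = 2 * a + b" and cd: "c < m" "d < 2" "v = 2 * c + d"
    using u v unfolding a_b_c_d_def by auto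
  have partner_u: "partner u = 2 * a + (1 - b)" and partner_v: "partner v = 2 * c + (1 - d)"
    using u v unfolding partner_def a_b_c_d_def by (auto elim!: evenE oddE)
  have "1 - b < 2" "1 - d < 2" by auto
  note val = prolonged_blocks[OF ab(1) _ cd(1)]
  have uv: "prolonged u v = 2 * H a c + (if b = d then 0 else 1)"
    using val[OF ab(2) cd(2)] ab(3) cd(3) good unfolding a_b_c_d_def by simp
  have partner_uv: "partner (prolonged u v) = 2 * H a c + (if b = d then 1 else 0)"
    using uv partner_double[OF H_less[OF ab(1) cd(1)]] by auto
  show "prolonged u v < 2 * m \<and> prolonged u v div 2 = H (u div 2) (v div 2) \<and>
      prolonged (partner u) v = partner (prolonged u v) \<and>
      prolonged u (partner v) = partner (prolonged u v)"
  proof (intro conjI)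
    show "prolonged u v < 2 * m" using uv H_less[OF ab(1) cd(1)] by auto
    show "prolonged u v div 2 = H (u div 2) (v div 2)" using uv unfolding a_b_c_d_def by simp
    show "prolonged (partner u) v = partner (prolonged u v)"
      using val[OF \<open>1 - b < 2\<close> cd(2)] partner_u partner_uv cd(3) good ab(2) cd(2)
      unfolding a_b_c_d_def by (cases "u mod 2 = 0"; cases "v mod 2 = 0") auto
    show "prolonged u (partner v) = partner (prolonged u v)"
      using val[OF ab(2) \<open>1 - d < 2\<close>] partner_v partner_uv ab(3) good ab(2) cd(2)
      unfolding a_b_c_d_def by (cases "u mod 2 = 0"; cases "v mod 2 = 0") auto
  qed
qed

text \<open>The entries with values in the pair \<open>H a (tau a)\<close> of the \<open>3 \<times> 3\<close> Latin subsquare on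
  the rows \<open>2 * a, 2 * a + 1, 2 * m\<close> and the columns \<open>2 * tau a, 2 * tau a + 1, 2 * m\<close>.\<close>

definition transversal_cell :: "nat \<Rightarrow> (nat \<times> nat) set" where
  "transversal_cell a = {(2 * a, 2 * tau a), (2 * a + 1, 2 * tau a + 1), (2 * a, 2 * m),
     (2 * a + 1, 2 * m), (2 * m, 2 * tau a), (2 * m, 2 * tau a + 1)}"

lemma prolonged_transversal_cell:
  assumes "a < m"
  shows "prolonged (2 * a) (2 * tau a) = 2 * H a (tau a)"
    "prolonged (2 * a + 1) (2 * tau a + 1) = 2 * H a (tau a) + 1"
    "prolonged (2 * a) (2 * m) = 2 * H a (tau a) + 1"
    "prolonged (2 * a + 1) (2 * m) = 2 * H a (tau a)"
    "prolonged (2 * m) (2 * tau a) = 2 * H a (tau a) + 1"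
    "prolonged (2 * m) (2 * tau a + 1) = 2 * H a (tau a)"
  using prolonged_blocks[OF assms _ tau_less[OF assms], of 0 0]
    prolonged_blocks[OF assms _ tau_less[OF assms], of 1 1]
    prolonged_last_col[OF assms, of 0] prolonged_last_col[OF assms, of 1]
    prolonged_last_row[OF tau_less[OF assms], of 0] prolonged_last_row[OF tau_less[OF assms], of 1]
    tau_inv_tau[OF assms] by simp_all

lemma transversal_cellE:
  assumes "(u, v) \<in> transversal_cell a"
  obtains "u = 2 * a" "v = 2 * tau a" | "u = 2 * a + 1" "v = 2 * tau a + 1"
  | "u = 2 * a" "v = 2 * m" | "u = 2 * a + 1" "v = 2 * m"
  | "u = 2 * m" "v = 2 * tau a" | "u = 2 * m" "v = 2 * tau a + 1"
  using assms unfolding transversal_cell_def by blast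

lemma cell_component_transversal_cell:
  assumes a: "a < m"
  shows "cell_component prolonged (transversal_cell a)"
  unfolding cell_component_def
proof (intro conjI allI impI)
  note val = prolonged_transversal_cell[OF a] and t = tau_less[OF a]
  note pd = partner_double[OF H_less[OF a t]]
  have bounds: "2 * m < 2 * m + 1" "2 * a + 1 < 2 * m + 1" "2 * tau a + 1 < 2 * m + 1"
    using a t by auto
  show "transversal_cell a \<subseteq> {0..<2 * m + 1} \<times> {0..<2 * m + 1}"
    using bounds unfolding transversal_cell_def by auto
  show "transversal_cell a \<noteq> {}" unfolding transversal_cell_def by simp
  fix u v assume uv: "(u, v) \<in> transversal_cell a"
  show "prolonged u v < 2 * m"
    using uv H_less[OF a t] val by (cases rule: transversal_cellE) auto
  show "\<exists>u'<2 * m + 1. (u', v) \<in> transversal_cell a \<and> prolonged u' v = partner (prolonged u v)"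
    using uv bounds val pd by (cases rule: transversal_cellE)
      (auto simp: transversal_cell_def conj_disj_distribL conj_disj_distribR ex_disj_distrib)
  show "\<exists>v'<2 * m + 1. (u, v') \<in> transversal_cell a \<and> prolonged u v' = partner (prolonged u v)"
    using uv bounds val pd by (cases rule: transversal_cellE)
      (auto simp: transversal_cell_def conj_disj_distribL conj_disj_distribR ex_disj_distrib)
qed

lemma prolonged_div_transversal_cell:
  assumes "a < m" "(u, v) \<in> transversal_cell a"
  shows "prolonged u v div 2 = H a (tau a)"
  using assms(2) prolonged_transversal_cell[OF assms(1)] by (cases rule: transversal_cellE) auto

lemma cell_class_transversal_cell: "a < m \<Longrightarrow> cell_class prolonged (transversal_cell a) = H a (tau a)"
  by (rule cell_class_eqI) (auto simp: transversal_cell_def prolonged_div_transversal_cell)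

lemma cell_family_transversal_cells:
  "cell_family prolonged (\<lambda>a c. c \<noteq> tau a) (transversal_cell ` {..<m})"
  unfolding cell_family_def
proof (intro conjI ballI allI impI)
  fix C assume "C \<in> transversal_cell ` {..<m}"
  then obtain a where a: "a < m" "C = transversal_cell a" by blast
  show "cell_component prolonged C"
    using cell_component_transversal_cell[OF a(1)] a(2) by simp
  fix u v assume uv: "(u, v) \<in> C"
  show "prolonged u v div 2 = cell_class prolonged C"
    using prolonged_div_transversal_cell[OF a(1)] cell_class_transversal_cell[OF a(1)] uv a(2) by simp
  show "\<not> (u < 2 * m \<and> v < 2 * m \<and> v div 2 \<noteq> tau (u div 2))"
    using uv a(2) by (auto elim: transversal_cellE)
next
  show "pairwise disjnt (transversal_cell ` {..<m})"
  proof (rule pairwiseI, rule ccontr)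
    fix C C' assume C: "C \<in> transversal_cell ` {..<m}" and C': "C' \<in> transversal_cell ` {..<m}"
      and "C \<noteq> C'" and "\<not> disjnt C C'"
    obtain a a' where a: "a < m" "a' < m" "C = transversal_cell a" "C' = transversal_cell a'"
      using C C' by blast
    obtain u v where uv: "(u, v) \<in> transversal_cell a" "(u, v) \<in> transversal_cell a'"
      using \<open>\<not> disjnt C C'\<close> a unfolding disjnt_def by auto
    have pos: "(u < 2 * m \<and> u div 2 = x) \<or> (u = 2 * m \<and> v div 2 = tau x)"
      if "x < m" "(u, v) \<in> transversal_cell x" for x
      using that(2) tau_less[OF that(1)] that(1) by (cases rule: transversal_cellE) auto
    have "a = a' \<or> tau a = tau a'" using pos[OF a(1) uv(1)] pos[OF a(2) uv(2)] by auto
    then have "a = a'"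
      using a inj_onD[OF bij_betw_imp_inj_on[OF tau_bij], of a a'] by auto
    then show False using a \<open>C \<noteq> C'\<close> by simp
  qed
qed

lemma card_transversal_cells_class:
  assumes "r < m"
  shows "1 \<le> card {C \<in> transversal_cell ` {..<m}. cell_class prolonged C = r}"
proof -
  obtain a where "a < m" "H a (tau a) = r" using transversal_surj[OF assms] by blast
  then have "transversal_cell a \<in> {C \<in> transversal_cell ` {..<m}. cell_class prolonged C = r}"
    using cell_class_transversal_cell by auto
  moreover have "finite {C \<in> transversal_cell ` {..<m}. cell_class prolonged C = r}" by simp
  ultimately show ?thesis by (auto simp: Suc_le_eq card_gt_0_iff)
qed

lemma card_off_transversal_class:
  assumes "r < m"
  shows "card {(p, c). p < m \<and> c < m \<and> c \<noteq> tau p \<and> H p c = r} = m - 1"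
proof -
  let ?I = "{(p, c). p < m \<and> c < m \<and> c \<noteq> tau p \<and> H p c = r}"
  obtain a where a: "a < m" "H a (tau a) = r" using transversal_surj[OF assms] by blast
  have "inj_on fst ?I"
    by (rule inj_onI) (auto dest: latin_square_row_inj[OF latin])
  moreover have "fst ` ?I = {0..<m} - {a}"
  proof
    show "fst ` ?I \<subseteq> {0..<m} - {a}"
      using a latin_square_row_inj[OF latin _ tau_less] by fastforce
    show "{0..<m} - {a} \<subseteq> fst ` ?I"
    proof
      fix p assume p: "p \<in> {0..<m} - {a}"
      then obtain c where c: "c < m" "H p c = r"
        using latin_square_row_surj[OF latin _ assms] by auto
      moreover have "c \<noteq> tau p"
        using transversal_inj[OF _ a(1)] p a(2) c(2) by auto
      ultimately show "p \<in> fst ` ?I" using p by (auto simp: image_iff)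
    qed
  qed
  ultimately show ?thesis
    using a(1) card_image by fastforce
qed

lemma ex_component_family_compose_prolonged:
  assumes famG: "component_family a G KG" and famF: "component_family b F KF" and "0 < a" "0 < b"
    and g: "\<And>r. r < m \<Longrightarrow> g \<le> card {K \<in> KG. pair_class G K = r}"
    and h: "\<And>r. r < m \<Longrightarrow> h \<le> card {L \<in> KF. pair_class F L = r}"
  shows "\<exists>f Ks. component_family (a + b) f Ks \<and>
    (\<forall>r<m. (m - 1) * g * h + 1 \<le> card {X \<in> Ks. pair_class f X = r})"
proof -
  let ?f = "compose a prolonged G F"
  let ?Ks = "product_components G KG F KF (\<lambda>a c. c \<noteq> tau a) \<union>
    cell_components a b G F (transversal_cell ` {..<m})"
  note compose = famG famF latin_square_prolonged respects_pairs_prolonged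
    cell_family_transversal_cells \<open>0 < a\<close> \<open>0 < b\<close>
  have "(m - 1) * g * h + 1 \<le> card {X \<in> ?Ks. pair_class ?f X = r}" if r: "r < m" for r
  proof -
    let ?I = "{(p, c). p < m \<and> c < m \<and> c \<noteq> tau p \<and> H p c = r}"
    have "finite ?I" by (rule finite_subset[of _ "{..<m} \<times> {..<m}"]) auto
    have "(m - 1) * g * h = card ?I * (g * h)"
      using card_off_transversal_class[OF r] by simp
    also have "\<dots> \<le> (\<Sum>(p, c)\<in>?I. card {K \<in> KG. pair_class G K = p} * card {L \<in> KF. pair_class F L = c})"
    proof -
      have "g * h \<le> (case pc of (p, c) \<Rightarrow> card {K \<in> KG. pair_class G K = p} * card {L \<in> KF. pair_class F L = c})"
        if "pc \<in> ?I" for pc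
        using that g h by (auto intro: mult_le_mono)
      then show ?thesis using sum_bounded_below[of ?I "g * h"] by simp
    qed
    also have "\<dots> \<le> card {(K, L) \<in> KG \<times> KF. pair_class F L \<noteq> tau (pair_class G K) \<and>
        H (pair_class G K) (pair_class F L) = r}"
      using finite_family[OF famG] finite_family[OF famF] \<open>finite ?I\<close>
      by (rule sum_card_classes_le) auto
    finally show ?thesis
      using card_class_compose[OF compose, of r] card_transversal_cells_class[OF r] by simp
  qed
  then show ?thesis
    using component_family_compose[OF compose] by blast
qed

lemma ex_binary_component_family:
  "\<exists>f Ks. component_family 2 f Ks \<and> (\<forall>r<m. m \<le> card {K \<in> Ks. pair_class f K = r})"
proof -
  have "\<exists>f Ks. component_family (Suc 0 + Suc 0) f Ks \<and>
      (\<forall>r<m. (m - 1) * 1 * 1 + 1 \<le> card {X \<in> Ks. pair_class f X = r})"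
    using card_unary_class
    by (intro ex_component_family_compose_prolonged[OF component_family_unary component_family_unary]) auto
  then obtain f Ks where "component_family 2 f Ks"
    and "\<forall>r<m. (m - 1) * 1 * 1 + 1 \<le> card {X \<in> Ks. pair_class f X = r}"
    by (auto simp: numeral_2_eq_2)
  moreover have "m \<le> (m - 1) * 1 * 1 + 1" by simp
  ultimately show ?thesis by (auto intro: le_trans)
qed

lemma ex_component_family:
  "0 < n \<Longrightarrow> \<exists>f Ks. component_family n f Ks \<and>
     (\<forall>r<m. (m - 1) ^ ((n - 1) div 2) * m ^ (n div 2) \<le> card {K \<in> Ks. pair_class f K = r})"
proof (induction n rule: less_induct)
  case (less n)
  have "n = 1 \<or> n = 2 \<or> (0 < n - 2 \<and> n = (n - 2) + 2)" using less.prems by arith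
  then consider "n = 1" | "n = 2" | j where "n = j + 2" "0 < j" by blast
  then show ?case
  proof cases
    case 1
    then show ?thesis using component_family_unary card_unary_class
      by (intro exI[of _ hd] exI[of _ unary_components]) auto
  next
    case 2
    then show ?thesis using ex_binary_component_family by simp
  next
    case 3
    obtain G KG where G: "component_family j G KG"
      "\<forall>r<m. (m - 1) ^ ((j - 1) div 2) * m ^ (j div 2) \<le> card {K \<in> KG. pair_class G K = r}"
      using less.IH[of j] 3 by auto
    obtain F KF where F: "component_family 2 F KF" "\<forall>r<m. m \<le> card {K \<in> KF. pair_class F K = r}"
      using ex_binary_component_family by blast
    have "(n - 1) div 2 = Suc ((j - 1) div 2)" "n div 2 = Suc (j div 2)" using 3 by presburger+
    then have eq: "(m - 1) ^ ((n - 1) div 2) * m ^ (n div 2)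
        = (m - 1) * ((m - 1) ^ ((j - 1) div 2) * m ^ (j div 2)) * m" by simp
    have "\<exists>f Ks. component_family (j + 2) f Ks \<and> (\<forall>r<m.
        (m - 1) * ((m - 1) ^ ((j - 1) div 2) * m ^ (j div 2)) * m + 1 \<le> card {X \<in> Ks. pair_class f X = r})"
      using G(2) F(2) by (intro ex_component_family_compose_prolonged[OF G(1) F(1) \<open>0 < j\<close>]) auto
    then obtain f Ks where "component_family n f Ks" and bound: "\<forall>r<m.
        (m - 1) * ((m - 1) ^ ((j - 1) div 2) * m ^ (j div 2)) * m + 1 \<le> card {X \<in> Ks. pair_class f X = r}"
      using 3 by blast
    moreover have "\<forall>r<m. (m - 1) ^ ((n - 1) div 2) * m ^ (n div 2) \<le> card {X \<in> Ks. pair_class f X = r}"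
      unfolding eq using bound by (simp add: Suc_le_eq less_imp_le)
    ultimately show ?thesis by blast
  qed
qed

theorem two_pow_le_Q_prolongation:
  assumes "2 \<le> n"
  shows "2 ^ ((m - 1) ^ ((n - 1) div 2) * m ^ ((n + 2) div 2)) \<le> Q n (2 * m + 1)"
proof -
  obtain f Ks where family: "component_family n f Ks"
    and classes: "\<forall>r<m. (m - 1) ^ ((n - 1) div 2) * m ^ (n div 2) \<le> card {K \<in> Ks. pair_class f K = r}"
    using ex_component_family[of n] assms by auto
  have "(m - 1) ^ ((n - 1) div 2) * m ^ ((n + 2) div 2) = m * ((m - 1) ^ ((n - 1) div 2) * m ^ (n div 2))"
    by simp
  also have "\<dots> \<le> card Ks"
    using card_family_ge[OF family] classes by blast
  finally have "(2::nat) ^ ((m - 1) ^ ((n - 1) div 2) * m ^ ((n + 2) div 2)) \<le> 2 ^ card Ks"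
    by simp
  also have "\<dots> \<le> Q n (2 * m + 1)"
    using two_pow_card_le_Q[OF family] .
  finally show ?thesis .
qed

end

section \<open>Latin squares with a transversal\<close>

lemma add_mod_inj:
  fixes r :: nat
  assumes "x < r" "y < r" "(a + x) mod r = (a + y) mod r"
  shows "x = y"
proof -
  have "[x = y] (mod r)"
    using assms(3) cong_add_lcancel_nat by (simp add: cong_def)
  then show ?thesis using cong_less_modulus_unique_nat assms(1,2) by blast
qed

lemma add_double_mod_inj:
  fixes r :: nat
  assumes "odd r" "x < r" "y < r" "(a + 2 * x) mod r = (a + 2 * y) mod r"
  shows "x = y"
proof -
  have "[2 * x = 2 * y] (mod r)"
    using assms(4) cong_add_lcancel_nat by (simp add: cong_def)
  moreover have "coprime 2 r" using assms(1) by simp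
  ultimately have "[x = y] (mod r)" by (simp add: cong_mult_lcancel_nat)
  then show ?thesis using cong_less_modulus_unique_nat assms(2,3) by blast
qed

lemma latin_square_if_symmetric:
  fixes q :: "nat \<Rightarrow> nat \<Rightarrow> nat"
  assumes "\<And>u v. q u v = q v u" and "\<And>u v. u < k \<Longrightarrow> v < k \<Longrightarrow> q u v < k"
    and "\<And>u v v'. u < k \<Longrightarrow> v < k \<Longrightarrow> v' < k \<Longrightarrow> q u v = q u v' \<Longrightarrow> v = v'"
  shows "latin_square k q"
proof -
  have "bij_betw (q u) {0..<k} {0..<k}" if "u < k" for u
    by (rule bij_betw_atLeast0LessThan_if_inj[OF assms(2)[OF that] assms(3)[OF that]])
  moreover have "(\<lambda>u. q u v) = q v" for v
    by (rule ext) (rule assms(1))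
  ultimately show ?thesis unfolding latin_square_def by simp
qed

lemma transversal_square_cyclic:
  assumes "odd m"
  shows "transversal_square m (\<lambda>p c. (p + c) mod m) id"
proof
  have "0 < m" using assms by (rule odd_pos)
  show "latin_square m (\<lambda>p c. (p + c) mod m)"
  proof (rule latin_square_if_symmetric)
    show "(u + v) mod m = (v + u) mod m" for u v by (simp add: add.commute)
    show "(u + v) mod m < m" for u v using \<open>0 < m\<close> by simp
    show "v = v'" if "u < m" "v < m" "v' < m" "(u + v) mod m = (u + v') mod m" for u v v'
      using add_mod_inj that(2-4) by blast
  qed
  show "bij_betw id {0..<m} {0..<m}" by simp
  show "bij_betw (\<lambda>p. (p + id p) mod m) {0..<m} {0..<m}"
  proof (rule bij_betw_atLeast0LessThan_if_inj)
    show "(p + id p) mod m < m" for p using \<open>0 < m\<close> by simp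
    show "p = p'" if "p < m" "p' < m" "(p + id p) mod m = (p' + id p') mod m" for p p'
      using add_double_mod_inj[OF assms that(1,2), of 0] that(3) by (simp add: mult_2)
  qed
qed

text \<open>For odd \<open>r\<close>, the addition table of \<open>\<int>/r\<close> prolonged along its diagonal: the diagonal
  entries \<open>2 * p\<close> move to the new row and column \<open>r\<close>, and the diagonal becomes \<open>r\<close>.\<close>

definition cyclic_prolongation :: "nat \<Rightarrow> nat \<Rightarrow> nat \<Rightarrow> nat" where
  "cyclic_prolongation r p c =
     (if p < r \<and> c < r then if p = c then r else (p + c) mod r
      else if p < r then (2 * p) mod r else if c < r then (2 * c) mod r else r)"

definition cyclic_successor :: "nat \<Rightarrow> nat \<Rightarrow> nat" where
  "cyclic_successor r p = (if p < r then (p + 1) mod r else r)"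

lemma cyclic_prolongation_row_inj:
  assumes "odd r" "p \<le> r" "c \<le> r" "c' \<le> r"
    and eq: "cyclic_prolongation r p c = cyclic_prolongation r p c'"
  shows "c = c'"
proof -
  have "0 < r" using assms(1) by (rule odd_pos)
  then have less: "x mod r < r" for x by simp
  note add = add_mod_inj[of _ r p] and double = add_double_mod_inj[OF assms(1), of _ _ 0]
  show ?thesis
  proof (cases "p < r")
    case True
    let ?\<sigma> = "\<lambda>x. if x = r then p else x"
    have val: "cyclic_prolongation r p x = (if x = p then r else (p + ?\<sigma> x) mod r)" if "x \<le> r" for x
      using that True unfolding cyclic_prolongation_def by (auto simp: mult_2)
    show ?thesis
    proof (cases "c = p \<or> c' = p")
      case True
      then show ?thesis using eq val[OF assms(3)] val[OF assms(4)] less by (metis less_irrefl)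
    next
      case False
      then have "(p + ?\<sigma> c) mod r = (p + ?\<sigma> c') mod r"
        using eq val[OF assms(3)] val[OF assms(4)] by simp
      moreover have "?\<sigma> c < r" "?\<sigma> c' < r" using assms(3,4) \<open>p < r\<close> by auto
      ultimately have "?\<sigma> c = ?\<sigma> c'" by (rule add_mod_inj[rotated 2])
      then show ?thesis using False by (auto split: if_splits)
    qed
  next
    case False
    then have val: "cyclic_prolongation r p x = (if x < r then (2 * x) mod r else r)" if "x \<le> r" for x
      using assms(2) that unfolding cyclic_prolongation_def by auto
    show ?thesis
    proof (cases "c < r \<and> c' < r")
      case True
      then show ?thesis using eq val[OF assms(3)] val[OF assms(4)] double[of c c'] by simp
    next
      case False
      then show ?thesis
        using eq val[OF assms(3)] val[OF assms(4)] less[of "2 * c"] less[of "2 * c'"] assms(3,4)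
        by (cases "c < r"; cases "c' < r") auto
    qed
  qed
qed

lemma latin_square_cyclic_prolongation:
  assumes "odd r"
  shows "latin_square (r + 1) (cyclic_prolongation r)"
proof (rule latin_square_if_symmetric)
  show "cyclic_prolongation r u v = cyclic_prolongation r v u" for u v
    unfolding cyclic_prolongation_def by (auto simp: add.commute)
  show "cyclic_prolongation r u v < r + 1" for u v
    using odd_pos[OF assms] unfolding cyclic_prolongation_def by (auto intro: less_SucI)
  show "v = v'" if "u < r + 1" "v < r + 1" "v' < r + 1"
    "cyclic_prolongation r u v = cyclic_prolongation r u v'" for u v v'
    using cyclic_prolongation_row_inj[OF assms, of u v v'] that by simp
qed

lemma bij_betw_mod_extension:
  fixes r :: nat
  assumes "0 < r" and inj: "\<And>p p'. p < r \<Longrightarrow> p' < r \<Longrightarrow> g p mod r = g p' mod r \<Longrightarrow> p = p'"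
  shows "bij_betw (\<lambda>p. if p < r then g p mod r else r) {0..<r + 1} {0..<r + 1}"
proof (rule bij_betw_atLeast0LessThan_if_inj)
  have less: "x mod r < r" for x using assms(1) by simp
  show "(if p < r then g p mod r else r) < r + 1" for p
    using less[of "g p"] by simp
  show "p = p'" if "p < r + 1" "p' < r + 1"
    and eq: "(if p < r then g p mod r else r) = (if p' < r then g p' mod r else r)" for p p'
  proof (cases "p < r"; cases "p' < r")
    assume p: "p < r" "p' < r"
    then have "g p mod r = g p' mod r" using eq by simp
    then show ?thesis using inj p by blast
  next
    assume "p < r" "\<not> p' < r"
    then show ?thesis using eq less[of "g p"] by (metis less_irrefl)
  next
    assume "\<not> p < r" "p' < r"
    then show ?thesis using eq less[of "g p'"] by (metis less_irrefl)
  next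
    assume "\<not> p < r" "\<not> p' < r"
    then show ?thesis using that(1,2) by simp
  qed
qed

lemma cyclic_prolongation_successor:
  assumes "3 \<le> r" "p < r + 1"
  shows "cyclic_prolongation r p (cyclic_successor r p) = (if p < r then (1 + 2 * p) mod r else r)"
proof (cases "p < r")
  case True
  have "(p + 1) mod r \<noteq> p"
  proof (cases "p + 1 < r")
    case False
    then have "p + 1 = r" using True by simp
    then show ?thesis using assms(1) by simp
  qed simp
  then show ?thesis
    using True assms(1)
    unfolding cyclic_prolongation_def cyclic_successor_def by (simp add: mod_add_right_eq mult_2)
next
  case False
  then show ?thesis unfolding cyclic_prolongation_def cyclic_successor_def by simp
qed

lemma transversal_square_cyclic_prolongation:
  assumes "odd r" "3 \<le> r"
  shows "transversal_square (r + 1) (cyclic_prolongation r) (cyclic_successor r)"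
proof
  show "latin_square (r + 1) (cyclic_prolongation r)"
    using latin_square_cyclic_prolongation[OF assms(1)] .
  show "bij_betw (cyclic_successor r) {0..<r + 1} {0..<r + 1}"
    unfolding cyclic_successor_def
  proof (rule bij_betw_mod_extension)
    show "p = p'" if "p < r" "p' < r" "(p + 1) mod r = (p' + 1) mod r" for p p'
      using add_mod_inj[of p r p' 1] that by (simp add: add.commute)
  qed (use assms(2) in simp)
  have "bij_betw (\<lambda>p. if p < r then (1 + 2 * p) mod r else r) {0..<r + 1} {0..<r + 1}"
  proof (rule bij_betw_mod_extension)
    show "p = p'" if "p < r" "p' < r" "(1 + 2 * p) mod r = (1 + 2 * p') mod r" for p p'
      using add_double_mod_inj[OF assms(1) that] .
  qed (use assms(2) in simp)
  then show "bij_betw (\<lambda>p. cyclic_prolongation r p (cyclic_successor r p)) {0..<r + 1} {0..<r + 1}"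
    by (rule bij_betw_cong[THEN iffD1, rotated]) (simp add: cyclic_prolongation_successor[OF assms(2)])
qed

theorem two_pow_le_Q_if_3_le:
  assumes "3 \<le> m" "2 \<le> n"
  shows "2 ^ ((m - 1) ^ ((n - 1) div 2) * m ^ ((n + 2) div 2)) \<le> Q n (2 * m + 1)"
proof (cases "odd m")
  case True
  then interpret transversal_square m "\<lambda>p c. (p + c) mod m" id
    by (rule transversal_square_cyclic)
  show ?thesis using two_pow_le_Q_prolongation[OF assms(2)] .
next
  case False
  then have "odd (m - 1)" "3 \<le> m - 1" "m - 1 + 1 = m"
    using assms(1) by presburger+
  then interpret transversal_square m "cyclic_prolongation (m - 1)" "cyclic_successor (m - 1)"
    using transversal_square_cyclic_prolongation by metis
  show ?thesis using two_pow_le_Q_prolongation[OF assms(2)] .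
qed

section \<open>Order five\<close>

interpretation order5: paired_symbols 2 5
  by unfold_locales simp

definition square5 :: "nat \<Rightarrow> nat \<Rightarrow> nat" where
  "square5 u v = [[0, 1, 2, 3, 4], [1, 0, 3, 4, 2], [2, 3, 4, 0, 1], [3, 4, 1, 2, 0], [4, 2, 0, 1, 3]] ! u ! v"

text \<open>The entries of \<open>square5\<close> with values \<open>0\<close> and \<open>1\<close> outside the block \<open>{0, 1} \<times> {0, 1}\<close>.\<close>

definition cell5 :: "(nat \<times> nat) set" where
  "cell5 = {(2, 3), (2, 4), (3, 2), (3, 4), (4, 2), (4, 3)}"

lemma less_5_iff: "(u::nat) < 5 \<longleftrightarrow> u = 0 \<or> u = 1 \<or> u = 2 \<or> u = 3 \<or> u = 4"
  by auto

lemma ex_less_5_iff: "(\<exists>u<(5::nat). P u) \<longleftrightarrow> P 0 \<or> P 1 \<or> P 2 \<or> P 3 \<or> P 4"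
  unfolding less_5_iff by blast

lemma partner5: "order5.partner 0 = 1" "order5.partner (Suc 0) = 0" "order5.partner 2 = 3"
  "order5.partner 3 = 2" "order5.partner 4 = 4"
  by (simp_all add: order5.partner_def)

lemma latin_square_square5: "latin_square 5 square5"
proof -
  have five: "{0..<5::nat} = {0, 1, 2, 3, 4}" by auto
  have "square5 u ` {0..<5} = {0..<5}" if "u < 5" for u
    using that unfolding five less_5_iff by (auto simp: square5_def)
  moreover have "(\<lambda>u. square5 u v) ` {0..<5} = {0..<5}" if "v < 5" for v
    using that unfolding five less_5_iff by (auto simp: square5_def)
  ultimately show ?thesis
    unfolding latin_square_def bij_betw_def by (simp add: eq_card_imp_inj_on)
qed

lemma respects_pairs_square5: "order5.respects_pairs square5 (\<lambda>p c. p = 0 \<and> c = 0) (\<lambda>p c. 0)"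
  unfolding order5.respects_pairs_def
proof (intro allI impI)
  fix u v :: nat assume "u < 2 * 2" "v < 2 * 2" "u div 2 = 0 \<and> v div 2 = 0"
  then have "u = 0 \<or> u = 1" "v = 0 \<or> v = 1" by auto
  then show "square5 u v < 2 * 2 \<and> square5 u v div 2 = 0 \<and>
      square5 (order5.partner u) v = order5.partner (square5 u v) \<and>
      square5 u (order5.partner v) = order5.partner (square5 u v)"
    by (auto simp: square5_def partner5)
qed

lemma cell_class_cell5: "order5.cell_class square5 cell5 = 0"
  by (rule order5.cell_class_eqI) (auto simp: cell5_def square5_def)

lemma cell_family_cell5: "order5.cell_family square5 (\<lambda>p c. p = 0 \<and> c = 0) {cell5}"
  unfolding order5.cell_family_def
proof (intro conjI ballI allI impI)
  fix C assume "C \<in> {cell5}"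
  then have C: "C = cell5" by simp
  show "order5.cell_component square5 C"
    unfolding order5.cell_component_def C
    by (auto simp: cell5_def square5_def partner5 ex_less_5_iff)
  fix u v assume "(u, v) \<in> C"
  then show "square5 u v div 2 = order5.cell_class square5 C"
    and "\<not> (u < 2 * 2 \<and> v < 2 * 2 \<and> u div 2 = 0 \<and> v div 2 = 0)"
    using cell_class_cell5 by (auto simp: C cell5_def square5_def)
qed simp

abbreviation class0 :: "(nat list \<Rightarrow> nat) \<Rightarrow> nat list set set \<Rightarrow> nat" where
  "class0 f Ks \<equiv> card {K \<in> Ks. order5.pair_class f K = 0}"

lemma card_class0_pairs:
  assumes "finite KG" "finite KH"
  shows "card {(K, L) \<in> KG \<times> KH. order5.pair_class G K = 0 \<and> order5.pair_class H L = 0}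
    = class0 G KG * class0 H KH"
proof -
  have "{(K, L) \<in> KG \<times> KH. order5.pair_class G K = 0 \<and> order5.pair_class H L = 0}
      = {K \<in> KG. order5.pair_class G K = 0} \<times> {L \<in> KH. order5.pair_class H L = 0}"
    by auto
  then show ?thesis by (simp add: card_cartesian_product)
qed

lemma ex_component_family_compose_square5:
  assumes famG: "order5.component_family a G KG" and famH: "order5.component_family b H KH"
    and "0 < a" "0 < b"
  shows "\<exists>f Ks. order5.component_family (a + b) f Ks \<and> class0 G KG * class0 H KH + 1 \<le> class0 f Ks"
proof -
  note compose = famG famH latin_square_square5 respects_pairs_square5 cell_family_cell5
    \<open>0 < a\<close> \<open>0 < b\<close>
  have "{C \<in> {cell5}. order5.cell_class square5 C = 0} = {cell5}"
    using cell_class_cell5 by auto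
  then have "class0 G KG * class0 H KH + 1 \<le> class0 (compose a square5 G H)
      (order5.product_components G KG H KH (\<lambda>p c. p = 0 \<and> c = 0) \<union> order5.cell_components a b G H {cell5})"
    using order5.card_class_compose[OF compose, of 0]
      card_class0_pairs[OF order5.finite_family[OF famG] order5.finite_family[OF famH]] by simp
  then show ?thesis
    using order5.component_family_compose[OF compose] by blast
qed

lemma ex_binary_component_family5: "\<exists>f Ks. order5.component_family 2 f Ks \<and> 2 \<le> class0 f Ks"
proof -
  have "class0 hd order5.unary_components = 1"
    using order5.card_unary_class by simp
  then show ?thesis
    using ex_component_family_compose_square5[OF order5.component_family_unary order5.component_family_unary]
    by (auto simp: numeral_2_eq_2)
qed

lemma ex_component_family5:
  "0 < n \<Longrightarrow> \<exists>f Ks. order5.component_family n f Ks \<and> 2 ^ ((n + 1) div 2) \<le> class0 f Ks + 1"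
proof (induction n rule: less_induct)
  case (less n)
  have "n = 1 \<or> n = 2 \<or> (0 < n - 2 \<and> n = (n - 2) + 2)" using less.prems by arith
  then consider "n = 1" | "n = 2" | j where "n = j + 2" "0 < j" by blast
  then show ?case
  proof cases
    case 1
    then show ?thesis
      using order5.component_family_unary order5.card_unary_class[of 0]
      by (intro exI[of _ hd] exI[of _ order5.unary_components]) auto
  next
    case 2
    then show ?thesis using ex_binary_component_family5 by fastforce
  next
    case 3
    obtain G KG where G: "order5.component_family j G KG" "2 ^ ((j + 1) div 2) \<le> class0 G KG + 1"
      using less.IH[of j] 3 by auto
    obtain F KF where F: "order5.component_family 2 F KF" "2 \<le> class0 F KF"
      using ex_binary_component_family5 by blast
    obtain f Ks where f: "order5.component_family n f Ks" "class0 G KG * class0 F KF + 1 \<le> class0 f Ks"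
      using ex_component_family_compose_square5[OF G(1) F(1) \<open>0 < j\<close>] 3 by auto
    have "2 ^ ((n + 1) div 2) \<le> 2 * (class0 G KG + 1)"
      using G(2) 3 by simp
    also have "\<dots> \<le> class0 G KG * class0 F KF + 2"
      using mult_le_mono2[OF F(2), of "class0 G KG"] by simp
    also have "\<dots> \<le> class0 f Ks + 1"
      using f(2) by simp
    finally show ?thesis using f(1) by blast
  qed
qed

theorem two_pow_le_Q_5:
  assumes "2 \<le> n"
  shows "2 ^ 2 ^ ((n + 2) div 2) \<le> Q n 5"
proof -
  let ?U = order5.unary_components and ?good = "\<lambda>p c. p = 0 \<and> c = (0::nat)"
  obtain G KG where G: "order5.component_family (n - 1) G KG" "2 ^ (n div 2) \<le> class0 G KG + 1"
    using ex_component_family5[of "n - 1"] assms by auto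
  note U = order5.component_family_unary
  have "class0 G KG \<le> card KG"
    using order5.finite_family[OF G(1)] by (intro card_mono) auto
  moreover have "class0 G KG \<le> card (order5.product_components G KG hd ?U ?good)"
    using order5.card_product_components[OF G(1) U, where good = ?good]
      card_class0_pairs[OF order5.finite_family[OF G(1)] order5.finite_family[OF U]]
      order5.card_unary_class[of 0] by simp
  moreover have "(2::nat) ^ ((n + 2) div 2) = 2 * 2 ^ (n div 2)" by simp
  ultimately have "2 ^ ((n + 2) div 2) \<le> card KG + card ?U + card (order5.product_components G KG hd ?U ?good)"
    using G(2) order5.card_unary_components by linarith
  then have "(2::nat) ^ 2 ^ ((n + 2) div 2)
      \<le> 2 ^ (card KG + card ?U + card (order5.product_components G KG hd ?U ?good))"
    by (rule power_increasing) simp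
  also have "\<dots> \<le> Q (n - 1 + Suc 0) 5"
    using order5.two_pow_card_le_Q_compose[OF G(1) U latin_square_square5 respects_pairs_square5] assms
    by simp
  finally show ?thesis using assms by simp
qed

theorem two_pow_le_Q:
  assumes "2 \<le> m" "2 \<le> n"
  shows "2 ^ ((m - 1) ^ ((n - 1) div 2) * m ^ ((n + 2) div 2)) \<le> Q n (2 * m + 1)"
proof (cases "m = 2")
  case True
  then show ?thesis using two_pow_le_Q_5[OF assms(2)] by simp
next
  case False
  then show ?thesis using two_pow_le_Q_if_3_le assms by simp
qed

lemma nat_floor_half: "0 < n \<Longrightarrow> nat \<lfloor>(real n - 1) / 2\<rfloor> = (n - 1) div 2"
proof -
  assume "0 < n"
  then have "(real n - 1) / 2 = real (n - 1) / real (2::nat)" by (simp add: of_nat_diff)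
  then show ?thesis by (simp only: floor_divide_of_nat_eq nat_int)
qed

lemma nat_ceiling_half: "nat \<lceil>(real n + 1) / 2\<rceil> = (n + 2) div 2"
proof -
  have "\<lceil>(real n + 1) / 2\<rceil> = int ((n + 2) div 2)"
    by (rule ceiling_unique) (cases "even n"; auto elim!: evenE oddE)+
  then show ?thesis by simp
qed

lemma powr_half_less_power_mult:
  fixes a b :: real
  assumes "0 < a" "a < b" "0 < n"
  shows "a powr (real n / 2) * b powr (real n / 2) < a ^ ((n - 1) div 2) * b ^ ((n + 2) div 2)"
proof -
  define p q t where "p = (n - 1) div 2" and "q = (n + 2) div 2" and "t = real n / 2"
  have "real (2 * p) < real n" "real (p + q) = real n"
    using assms(3) unfolding of_nat_less_iff of_nat_eq_iff p_def q_def by presburger+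
  then obtain s where "0 < s" "t = real p + s" "real q = t + s"
    by (intro that[of "t - real p"]) (auto simp: t_def)
  have "a powr t * b powr t = a ^ p * b powr t * a powr s"
    using \<open>t = real p + s\<close> assms(1) by (simp add: powr_add powr_realpow)
  also have "\<dots> < a ^ p * b powr t * b powr s"
    using powr_less_mono2[OF \<open>0 < s\<close> _ assms(2)] assms(1,2) by simp
  also have "\<dots> = a ^ p * b ^ q"
    using \<open>real q = t + s\<close> assms(1,2) powr_realpow[of b q] by (simp add: powr_add)
  finally show ?thesis unfolding p_def q_def t_def .
qed

theorem theorem2:
  fixes n k :: nat
  assumes "odd k" and "k \<ge> 5" and "n \<ge> 2"
  shows "real (Q n k) \<ge>
           2 powr ((((real k - 3) / 2) ^ nat \<lfloor>(real n - 1) / 2\<rfloor>)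
                   * (((real k - 1) / 2) ^ nat \<lceil>(real n + 1) / 2\<rceil>))
     \<and> 2 powr ((((real k - 3) / 2) ^ nat \<lfloor>(real n - 1) / 2\<rfloor>)
                   * (((real k - 1) / 2) ^ nat \<lceil>(real n + 1) / 2\<rceil>))
         > 2 powr ((((real k - 3) / 2) powr (real n / 2)) * (((real k - 1) / 2) powr (real n / 2)))"
proof -
  obtain m where k: "k = 2 * m + 1" using assms(1) oddE by blast
  then have m: "2 \<le> m" using assms(2) by simp
  let ?e = "(m - 1) ^ ((n - 1) div 2) * m ^ ((n + 2) div 2)"
  have base: "(real k - 3) / 2 = real (m - 1)" "(real k - 1) / 2 = real m"
    using k m by (simp_all add: of_nat_diff)
  have exponents: "nat \<lfloor>(real n - 1) / 2\<rfloor> = (n - 1) div 2" "nat \<lceil>(real n + 1) / 2\<rceil> = (n + 2) div 2"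
    using nat_floor_half nat_ceiling_half assms(3) by simp_all
  have "real (m - 1) powr (real n / 2) * real m powr (real n / 2) < real ?e"
    using powr_half_less_power_mult[of "real (m - 1)" "real m" n] m assms(3) by simp
  then have "2 powr (real (m - 1) powr (real n / 2) * real m powr (real n / 2)) < 2 powr real ?e"
    by (rule powr_less_mono) simp
  moreover have "2 powr real ?e = real (2 ^ ?e)"
    by (subst powr_realpow) simp_all
  moreover have "real (2 ^ ?e) \<le> real (Q n k)"
    unfolding of_nat_le_iff k by (rule two_pow_le_Q[OF m assms(3)])
  ultimately show ?thesis
    unfolding base exponents of_nat_mult of_nat_power by (intro conjI; linarith)
qed

end
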